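(* Define for integers $0\le r_1,r_2\le m$ the entire function $$\omega^{r_1,r_2}(t,m)=\frac{m!}{\Gamma(t+1)\,\Gamma(r_2-t+1)\,\Gamma(r_1-r_2+t+1)\,\Gamma(m-r_1-t+1)}$$ (with $1/\Gamma$ entire). Then for $0\le r_1,r_2\le n$, $0\le s\le N(r_1,r_2)$ and all $t\in\mathbb C$, $$\omega^{r_1,r_2}(t,n)\,\lambda_s^{r_1,r_2}(t,n)=\frac{[n]_{2s}}{[n-r_1]_s\,[r_2]_s}\,\nabla^s\,\omega^{r_1-s,r_2-s}(t,n-2s),$$ where $\nabla$ acts in the variable $t$.
   Context: For a finite set $\Omega$ with $|\Omega|=n\ge1$, let $G=S(\Omega)$, $X=\mathcal P(\Omega)$, $X_r=\{x\in X:|x|=r\}$, with $G$ acting on $L^2(X)$ (complex functions on $X$; $L^2(X_r)$ = functions supported on $X_r$) by $(\rho(g)\psi)(x)=\psi(g^{-1}x)$. For $0\le s\le\min(r,n-r)$, $L^2(X_r)_s$ is the unique irreducible $G$-subspace of $L^2(X_r)$ isomorphic to the irreducible representation associated with the partition $(n-s,s)$. $N(r_1,r_2)=\min(r_1,n-r_1,r_2,n-r_2)$. For $0\le s\le N(r_1,r_2)$, $\Lambda_s^{r_1,r_2}$ is a $G$-equivariant map $L^2(X)\to L^2(X)$ sending $L^2(X_{r_1})_s$ into $L^2(X_{r_2})_s$ and vanishing on its orthogonal complement, with kernel $\lambda$ defined on integers $\max(0,r_2-r_1)\le k\le\min(n-r_1,r_2)$ by $(\Lambda_s^{r_1,r_2}\psi)(x_2)=\sum_{x_1\in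 X_{r_1}}\lambda(|x_2\setminus x_1|)\psi(x_1)$. The kernel agrees on its domain with a unique polynomial of degree $s$ which is nonzero at $0$; $\Lambda_s^{r_1,r_2}$ is normalized so that this polynomial takes the value $1$ at $t=0$, and this polynomial is denoted $\lambda_s^{r_1,r_2}(t,n)$. $\nabla h(t)=h(t)-h(t-1)$; $[\alpha]_k=\alpha(\alpha-1)\cdots(\alpha-k+1)$. *)

theory Defs
  imports "HOL-Analysis.Analysis" "HOL-Computational_Algebra.Polynomial"
begin

text \<open>Ground set Omega = {..<n}; functions on subsets of Omega are nat set => complex.
  G = S(Omega) is the set of permutations g with g permutes {..<n}.\<close>

definition act :: "(nat \<Rightarrow> nat) \<Rightarrow> (nat set \<Rightarrow> complex) \<Rightarrow> (nat set \<Rightarrow> complex)" where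
  "act g \<psi> = (\<lambda>x. \<psi> (inv g ` x))"

definition L2X :: "nat \<Rightarrow> (nat set \<Rightarrow> complex) set" where
  "L2X n = {\<psi>. \<forall>x. \<psi> x \<noteq> 0 \<longrightarrow> x \<subseteq> {..<n}}"

definition L2 :: "nat \<Rightarrow> nat \<Rightarrow> (nat set \<Rightarrow> complex) set" where
  "L2 n r = {\<psi>. \<forall>x. \<psi> x \<noteq> 0 \<longrightarrow> x \<subseteq> {..<n} \<and> card x = r}"

definition csubspace :: "(nat set \<Rightarrow> complex) set \<Rightarrow> bool" where
  "csubspace V \<longleftrightarrow> (\<lambda>_. 0) \<in> V \<and> (\<forall>\<phi>\<in>V. \<forall>\<psi>\<in>V. (\<lambda>x. \<phi> x + \<psi> x) \<in> V)
     \<and> (\<forall>c. \<forall>\<psi>\<in>V. (\<lambda>x. c * \<psi> x) \<in> V)"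

definition Gsubspace :: "nat \<Rightarrow> (nat set \<Rightarrow> complex) set \<Rightarrow> bool" where
  "Gsubspace n V \<longleftrightarrow> V \<subseteq> L2X n \<and> csubspace V \<and> (\<forall>g. g permutes {..<n} \<longrightarrow> (\<forall>\<psi>\<in>V. act g \<psi> \<in> V))"

definition Girreducible :: "nat \<Rightarrow> (nat set \<Rightarrow> complex) set \<Rightarrow> bool" where
  "Girreducible n V \<longleftrightarrow> Gsubspace n V \<and> V \<noteq> {\<lambda>_. 0} \<and>
     (\<forall>W. Gsubspace n W \<and> W \<subseteq> V \<longrightarrow> W = {\<lambda>_. 0} \<or> W = V)"

definition Giso :: "nat \<Rightarrow> (nat set \<Rightarrow> complex) set \<Rightarrow> (nat set \<Rightarrow> complex) set \<Rightarrow> bool" where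
  "Giso n V W \<longleftrightarrow> (\<exists>f. bij_betw f V W
     \<and> (\<forall>\<phi>\<in>V. \<forall>\<psi>\<in>V. f (\<lambda>x. \<phi> x + \<psi> x) = (\<lambda>x. f \<phi> x + f \<psi> x))
     \<and> (\<forall>c. \<forall>\<psi>\<in>V. f (\<lambda>x. c * \<psi> x) = (\<lambda>x. c * f \<psi> x))
     \<and> (\<forall>g. g permutes {..<n} \<longrightarrow> (\<forall>\<psi>\<in>V. f (act g \<psi>) = act g (f \<psi>))))"

definition cspan :: "(nat set \<Rightarrow> complex) set \<Rightarrow> (nat set \<Rightarrow> complex) set" where
  "cspan S = {\<psi>. \<exists>F c. finite F \<and> F \<subseteq> S \<and> \<psi> = (\<lambda>x. \<Sum>f\<in>F. c f * f x)}"

text \<open>Polytabloid of shape (n-s,s): the tabloids of shape (n-s,s) are identified with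
  s-subsets of Omega (the second row). For a tableau whose first s columns are {a i, b i},
  the polytabloid is the signed sum over the column group.\<close>
definition polytabloid :: "nat \<Rightarrow> (nat \<Rightarrow> nat) \<Rightarrow> (nat \<Rightarrow> nat) \<Rightarrow> (nat set \<Rightarrow> complex)" where
  "polytabloid s a b = (\<lambda>x. \<Sum>E\<in>Pow {..<s}.
      (-1) ^ card E * (if x = (\<lambda>i. if i \<in> E then a i else b i) ` {..<s} then 1 else 0))"

text \<open>Specht module S^(n-s,s) realised inside L^2(X_s) (the permutation module M^(n-s,s)).\<close>
definition Specht :: "nat \<Rightarrow> nat \<Rightarrow> (nat set \<Rightarrow> complex) set" where
  "Specht n s = cspan {polytabloid s a b | a b.
      (\<forall>i<s. a i < n \<and> b i < n) \<and> inj_on a {..<s} \<and> inj_on b {..<s}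
      \<and> a ` {..<s} \<inter> b ` {..<s} = {}}"

definition L2comp :: "nat \<Rightarrow> nat \<Rightarrow> nat \<Rightarrow> (nat set \<Rightarrow> complex) set" where
  "L2comp n r s = (THE V. Girreducible n V \<and> V \<subseteq> L2 n r \<and> Giso n V (Specht n s))"

definition inner_L2 :: "nat \<Rightarrow> (nat set \<Rightarrow> complex) \<Rightarrow> (nat set \<Rightarrow> complex) \<Rightarrow> complex" where
  "inner_L2 n \<phi> \<psi> = (\<Sum>x\<in>Pow {..<n}. \<phi> x * cnj (\<psi> x))"

definition kernel_op :: "nat \<Rightarrow> nat \<Rightarrow> nat \<Rightarrow> (nat \<Rightarrow> complex) \<Rightarrow> (nat set \<Rightarrow> complex) \<Rightarrow> (nat set \<Rightarrow> complex)" where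
  "kernel_op n r1 r2 lam \<psi> = (\<lambda>x2. if x2 \<subseteq> {..<n} \<and> card x2 = r2
      then (\<Sum>x1\<in>{x1. x1 \<subseteq> {..<n} \<and> card x1 = r1}. lam (card (x2 - x1)) * \<psi> x1) else 0)"

definition Nmin :: "nat \<Rightarrow> nat \<Rightarrow> nat \<Rightarrow> nat" where
  "Nmin n r1 r2 = min (min r1 (n - r1)) (min r2 (n - r2))"

definition lambda_poly :: "nat \<Rightarrow> nat \<Rightarrow> nat \<Rightarrow> nat \<Rightarrow> complex poly" where
  "lambda_poly n r1 r2 s = (THE p. degree p = s \<and> poly p 0 = 1 \<and>
     (let \<Lambda> = kernel_op n r1 r2 (\<lambda>k. poly p (of_nat k)) in
       (\<forall>\<psi>\<in>L2comp n r1 s. \<Lambda> \<psi> \<in> L2comp n r2 s) \<and>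
       (\<forall>\<psi>\<in>L2X n. (\<forall>\<phi>\<in>L2comp n r1 s. inner_L2 n \<psi> \<phi> = 0) \<longrightarrow> \<Lambda> \<psi> = (\<lambda>_. 0))))"

definition omega :: "nat \<Rightarrow> nat \<Rightarrow> complex \<Rightarrow> nat \<Rightarrow> complex" where
  "omega r1 r2 t m = fact m * rGamma (t + 1) * rGamma (of_nat r2 - t + 1)
     * rGamma (of_nat r1 - of_nat r2 + t + 1) * rGamma (of_nat m - of_nat r1 - t + 1)"

definition nabla :: "(complex \<Rightarrow> complex) \<Rightarrow> complex \<Rightarrow> complex" where
  "nabla h = (\<lambda>t. h t - h (t - 1))"

definition ffact_c :: "complex \<Rightarrow> nat \<Rightarrow> complex" where
  "ffact_c \<alpha> k = (\<Prod>i<k. \<alpha> - of_nat i)"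

end

theory Submission
  imports Defs
begin

(* Lifting a polytabloid e_T of shape (n-s,s) to X_r by summing it over subsets gives a
   vector u_T; these lifts span an irreducible subspace of L^2(X_r) isomorphic to the Specht
   module, and it is the only one, so it is L^2(X_r)_s.  The operator sending psi to the sum
   over all tableaux T of <psi, u_T> u'_T (lifts to X_r1 and X_r2) is equivariant, maps
   L^2(X_r1)_s into L^2(X_r2)_s and kills the orthogonal complement; counting tableaux column
   by column shows that its kernel is 2^s R_s(|x2 - x1|) for a degree-s polynomial R_s given
   by a simple recursion.  Vectors of L^2(X_r) that transform under the column group of
   a tableau like e_T are determined by one value, which forces every admissible kernel to be
   a multiple of R_s, so lambda_s is R_s normalised at 0.  The recursion for R_s is exactly
   what one gets by applying nabla to omega times a polynomial, which yields the
   Rodrigues-type formula for nabla^s omega. *)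

section \<open>The Rodrigues polynomials\<close>

(* Chosen so that nabla (omega a b t m * R_i(t)) is a multiple of omega (a+1) (b+1) t (m+2)
   times R_(i+1)(t), see nabla_omega_mult_poly. *)
fun rodrigues_poly :: "nat \<Rightarrow> nat \<Rightarrow> nat \<Rightarrow> nat \<Rightarrow> complex poly" where
  "rodrigues_poly 0 a b m = 1"
| "rodrigues_poly (Suc i) a b m =
     [:of_nat b, -1:] * [:of_nat m - of_nat a, -1:] * rodrigues_poly i (a-1) (b-1) (m-2)
     - [:0, 1:] * [:of_nat a - of_nat b, 1:] * pcompose (rodrigues_poly i (a-1) (b-1) (m-2)) [:-1, 1:]"
lemma rGamma_eq_mult_succ: "w = z + 1 \<Longrightarrow> rGamma (z::complex) = z * rGamma w"
  using rGamma_plus1[of z] by simp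

lemma nabla_omega_mult_poly:
  fixes a b m :: nat and P :: "complex poly"
  shows "nabla (\<lambda>u. omega a b u m * poly P u) t =
    fact m / fact (m+2) * omega (a+1) (b+1) t (m+2) *
    poly ([:of_nat (b+1), -1:] * [:of_nat (m+2) - of_nat (a+1), -1:] * P
     - [:0, 1:] * [:of_nat (a+1) - of_nat (b+1), 1:] * pcompose P [:-1, 1:]) t"
proof -
  define A where "A = rGamma (t+1) * rGamma (of_nat b - t + 2) * rGamma (of_nat a - of_nat b + t + 1)
      * rGamma (of_nat m - of_nat a - t + 2)"
  have e1: "rGamma (of_nat b - t + 1) = (of_nat b - t + 1) * rGamma (of_nat b - t + 2)"
    by (rule rGamma_eq_mult_succ) simp
  have e2: "rGamma (of_nat m - of_nat a - t + 1) = (of_nat m - of_nat a - t + 1) * rGamma (of_nat m - of_nat a - t + 2)"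
    by (rule rGamma_eq_mult_succ) simp
  have e3: "rGamma (t - 1 + 1) = t * rGamma (t + 1)"
    using rGamma_eq_mult_succ[of "t+1" t] by simp
  have e4: "rGamma (of_nat a - of_nat b + (t - 1) + 1) = (of_nat a - of_nat b + t) * rGamma (of_nat a - of_nat b + t + 1)"
    using rGamma_eq_mult_succ[of "of_nat a - of_nat b + t + 1" "of_nat a - of_nat b + t"] by (simp add: algebra_simps)
  have e5: "rGamma (of_nat b - (t - 1) + 1) = rGamma (of_nat b - t + 2)"
    by (rule arg_cong[where f=rGamma]) simp
  have e6: "rGamma (of_nat m - of_nat a - (t - 1) + 1) = rGamma (of_nat m - of_nat a - t + 2)"
    by (rule arg_cong[where f=rGamma]) simp
  have o1: "omega a b t m = fact m * (of_nat b - t + 1) * (of_nat m - of_nat a - t + 1) * A"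
    unfolding omega_def A_def e1 e2 by (simp add: algebra_simps)
  have o2: "omega a b (t-1) m = fact m * t * (of_nat a - of_nat b + t) * A"
    unfolding omega_def A_def e3 e4 e5 e6 by (simp add: algebra_simps)
  have e7: "rGamma (of_nat (b+1) - t + 1) = rGamma (of_nat b - t + 2)"
    by (rule arg_cong[where f=rGamma]) simp
  have e8: "rGamma (of_nat (m+2) - of_nat (a+1) - t + 1) = rGamma (of_nat m - of_nat a - t + 2)"
    by (rule arg_cong[where f=rGamma]) simp
  have e9: "rGamma (of_nat (a+1) - of_nat (b+1) + t + 1) = rGamma (of_nat a - of_nat b + t + 1)"
    by (rule arg_cong[where f=rGamma]) simp
  have o3: "omega (a+1) (b+1) t (m+2) = fact (m+2) * A"
    unfolding omega_def A_def e7 e8 e9 by (simp add: algebra_simps)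
  have fm: "(fact (m+2) :: complex) \<noteq> 0" by (rule fact_nonzero)
  have r: "fact m / fact (m+2) * omega (a+1) (b+1) t (m+2) = (fact m :: complex) * A"
    unfolding o3 using fm by simp
  show ?thesis
    unfolding r unfolding nabla_def o1 o2
    by (simp add: poly_pcompose algebra_simps)
qed

lemma rodrigues_formula:
  "i \<le> a \<Longrightarrow> i \<le> b \<Longrightarrow> 2*i \<le> m \<Longrightarrow>
   (nabla ^^ i) (\<lambda>u. omega (a-i) (b-i) u (m-2*i)) =
   (\<lambda>t. fact (m-2*i) / fact m * omega a b t m * poly (rodrigues_poly i a b m) t)"
proof (induction i arbitrary: a b m)
  case 0
  then show ?case by (simp add: fact_nonzero)
next
  case (Suc i)
  define a' where "a' = a - 1"
  define b' where "b' = b - 1"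
  define m' where "m' = m - 2"
  have aa: "a = a' + 1" "b = b' + 1" "m = m' + 2" using Suc.prems unfolding a'_def b'_def m'_def by auto
  have IH: "(nabla ^^ i) (\<lambda>u. omega (a'-i) (b'-i) u (m'-2*i)) =
   (\<lambda>t. fact (m'-2*i) / fact m' * omega a' b' t m' * poly (rodrigues_poly i a' b' m') t)"
    using Suc.prems by (intro Suc.IH) (auto simp: a'_def b'_def m'_def)
  have eqs: "a - Suc i = a' - i" "b - Suc i = b' - i" "m - 2 * Suc i = m' - 2*i" using aa by auto
  have R: "rodrigues_poly (Suc i) a b m = [:of_nat (b'+1), -1:] * [:of_nat (m'+2) - of_nat (a'+1), -1:] * rodrigues_poly i a' b' m'
     - [:0, 1:] * [:of_nat (a'+1) - of_nat (b'+1), 1:] * pcompose (rodrigues_poly i a' b' m') [:-1, 1:]"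
    using aa by (simp add: a'_def b'_def m'_def)
  have fm: "(fact m' :: complex) \<noteq> 0" by (rule fact_nonzero)
  have gen: "\<And>x c F X::complex. c \<noteq> 0 \<Longrightarrow> x / c * (c / F * X) = x / F * X"
    by (simp add: field_simps)
  show ?case
  proof (rule ext)
    fix t
    have "(nabla ^^ Suc i) (\<lambda>u. omega (a - Suc i) (b - Suc i) u (m - 2 * Suc i)) t
       = nabla (\<lambda>t. fact (m'-2*i) / fact m' * (omega a' b' t m' * poly (rodrigues_poly i a' b' m') t)) t"
      unfolding funpow.simps comp_def eqs IH by (simp add: mult.assoc)
    also have "\<dots> = fact (m'-2*i) / fact m' * nabla (\<lambda>t. omega a' b' t m' * poly (rodrigues_poly i a' b' m') t) t"
      by (simp add: nabla_def algebra_simps)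
    also have "\<dots> = fact (m'-2*i) / fact m' * (fact m' / fact (m'+2) * (omega (a'+1) (b'+1) t (m'+2) * poly (rodrigues_poly (Suc i) a b m) t))"
      unfolding nabla_omega_mult_poly R by (simp only: mult.assoc)
    also have "\<dots> = fact (m'-2*i) / fact (m'+2) * (omega (a'+1) (b'+1) t (m'+2) * poly (rodrigues_poly (Suc i) a b m) t)"
      by (rule gen[OF fm])
    finally show "(nabla ^^ Suc i) (\<lambda>u. omega (a - Suc i) (b - Suc i) u (m - 2 * Suc i)) t =
         fact (m - 2 * Suc i) / fact m * omega a b t m * poly (rodrigues_poly (Suc i) a b m) t"
      unfolding eqs by (simp only: aa mult.assoc)
  qed
qed

definition shift_diff :: "complex poly \<Rightarrow> complex poly" where
  "shift_diff p = pcompose p [:-1, 1:] - p"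

lemma shift_diff_pCons: "shift_diff (pCons c p) = [:-1, 1:] * shift_diff p - p"
  unfolding shift_diff_def
  by (rule poly_eq_poly_eq_iff[THEN iffD1], rule ext) (simp add: poly_pcompose algebra_simps)

lemma shift_diff_degree_0: "degree p = 0 \<Longrightarrow> shift_diff p = 0"
  by (auto elim!: degree_eq_zeroE simp: shift_diff_def)

lemma coeff_linear_mult_Suc: "coeff ([:x, y:] * P) (Suc j) = x * coeff P (Suc j) + y * coeff P j"
  by (simp add: mult_pCons_left)

lemma degree_coeff_shift_diff:
  "degree p \<le> Suc k \<Longrightarrow> degree (shift_diff p) \<le> k \<and> coeff (shift_diff p) k = - of_nat (Suc k) * coeff p (Suc k)"
proof (induction p arbitrary: k rule: pCons_induct)
  case 0
  then show ?case by (simp add: shift_diff_def)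
next
  case (pCons c p)
  have dp: "degree p \<le> k"
    using pCons.prems by (auto simp: degree_pCons_eq_if split: if_splits)
  show ?case
  proof (cases k)
    case 0
    then have "degree p = 0" using dp by simp
    then have "shift_diff p = 0" by (rule shift_diff_degree_0)
    then show ?thesis unfolding shift_diff_pCons using 0 \<open>degree p = 0\<close> by simp
  next
    case (Suc k')
    have IH: "degree (shift_diff p) \<le> k' \<and> coeff (shift_diff p) k' = - of_nat (Suc k') * coeff p (Suc k')"
      using pCons.IH dp Suc by simp
    have d1: "degree ([:-1, 1:] * shift_diff p) \<le> k"
      using degree_mult_le[of "[:-1, 1:]" "shift_diff p"] IH Suc by (simp add: degree_pCons_eq_if split: if_splits)
    have c0: "coeff (shift_diff p) (Suc k') = 0" using IH by (simp add: coeff_eq_0)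
    have "coeff ([:-1, 1:] * shift_diff p) k = coeff (shift_diff p) k'"
      unfolding Suc coeff_linear_mult_Suc using c0 by simp
    then have "coeff (shift_diff (pCons c p)) k = - of_nat (Suc k) * coeff (pCons c p) (Suc k)"
    proof -
      have "coeff (shift_diff (pCons c p)) k = coeff (shift_diff p) k' - coeff p (Suc k')"
        unfolding shift_diff_pCons coeff_diff using \<open>coeff ([:-1, 1:] * shift_diff p) k = coeff (shift_diff p) k'\<close> Suc by simp
      also have "\<dots> = - of_nat (Suc k') * coeff p (Suc k') - coeff p (Suc k')"
        using IH by simp
      also have "\<dots> = - of_nat (Suc k) * coeff (pCons c p) (Suc k)"
        using Suc by (simp add: algebra_simps)
      finally show ?thesis .
    qed
    moreover have "degree (shift_diff (pCons c p)) \<le> k"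
      unfolding shift_diff_pCons using d1 dp by (intro degree_diff_le)
    ultimately show ?thesis by simp
  qed
qed

lemma rodrigues_poly_Suc_shift_diff:
  "rodrigues_poly (Suc i) a b m = [:of_nat b * (of_nat m - of_nat a), - of_nat m:] * rodrigues_poly i (a-1) (b-1) (m-2)
     - [:0, of_nat a - of_nat b, 1:] * shift_diff (rodrigues_poly i (a-1) (b-1) (m-2))"
  unfolding rodrigues_poly.simps shift_diff_def
  by (rule poly_eq_poly_eq_iff[THEN iffD1], rule ext) (simp add: poly_pcompose algebra_simps)

lemma rodrigues_poly_degree_lead_coeff: "2*i \<le> m \<Longrightarrow> degree (rodrigues_poly i a b m) \<le> i \<and> coeff (rodrigues_poly i a b m) i \<noteq> 0"
proof (induction i arbitrary: a b m)
  case 0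
  then show ?case by simp
next
  case (Suc i)
  define P where "P = rodrigues_poly i (a-1) (b-1) (m-2)"
  have IH: "degree P \<le> i" "coeff P i \<noteq> 0" using Suc by (auto simp: P_def)
  have R: "rodrigues_poly (Suc i) a b m = [:of_nat b * (of_nat m - of_nat a), - of_nat m:] * P
     - [:0, of_nat a - of_nat b, 1:] * shift_diff P" unfolding P_def by (rule rodrigues_poly_Suc_shift_diff)
  have d1: "degree ([:of_nat b * (of_nat m - of_nat a), - of_nat m:] * P) \<le> Suc i"
    using degree_mult_le[of "[:of_nat b * (of_nat m - of_nat a), - of_nat m:]" P] IH
    by (simp add: degree_pCons_eq_if split: if_splits)
  have c1: "coeff ([:of_nat b * (of_nat m - of_nat a), - of_nat m:] * P) (Suc i) = - of_nat m * coeff P i"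
    unfolding coeff_linear_mult_Suc using IH by (simp add: coeff_eq_0)
  have "degree ([:0, of_nat a - of_nat b, 1:] * shift_diff P) \<le> Suc i \<and>
        coeff ([:0, of_nat a - of_nat b, 1:] * shift_diff P) (Suc i) = - of_nat i * coeff P i"
  proof (cases i)
    case 0
    then have "shift_diff P = 0" using IH shift_diff_degree_0 by simp
    then show ?thesis using 0 by simp
  next
    case (Suc k)
    have S: "degree (shift_diff P) \<le> k" "coeff (shift_diff P) k = - of_nat (Suc k) * coeff P (Suc k)"
      using degree_coeff_shift_diff[of P k] IH Suc by auto
    have "degree ([:0, of_nat a - of_nat b, 1:] * shift_diff P) \<le> 2 + k"
      using degree_mult_le[of "[:0, of_nat a - of_nat b, 1:]" "shift_diff P"] S
      by (simp add: degree_pCons_eq_if split: if_splits)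
    moreover have "coeff ([:0, of_nat a - of_nat b, 1:] * shift_diff P) (Suc i) = coeff (shift_diff P) k"
      using S Suc by (simp add: mult_pCons_left coeff_eq_0)
    ultimately show ?thesis using S Suc by simp
  qed
  then have d2: "degree ([:0, of_nat a - of_nat b, 1:] * shift_diff P) \<le> Suc i"
    and c2: "coeff ([:0, of_nat a - of_nat b, 1:] * shift_diff P) (Suc i) = - of_nat i * coeff P i" by auto
  have "coeff (rodrigues_poly (Suc i) a b m) (Suc i) = (of_nat i - of_nat m) * coeff P i"
    unfolding R coeff_diff c1 c2 by (simp add: algebra_simps)
  moreover have "(of_nat i - of_nat m :: complex) \<noteq> 0" using Suc.prems by simp
  ultimately show ?case unfolding R using d1 d2 IH
    by (auto intro: degree_diff_le)
qed

lemma degree_rodrigues_poly: "2*i \<le> m \<Longrightarrow> degree (rodrigues_poly i a b m) = i"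
  using rodrigues_poly_degree_lead_coeff[of i m a b] by (meson antisym le_degree)

lemma poly_rodrigues_poly_0: "i \<le> a \<Longrightarrow> i \<le> b \<Longrightarrow> 2*i \<le> m \<Longrightarrow>
  poly (rodrigues_poly i a b m) 0 = ffact_c (of_nat b) i * ffact_c (of_nat m - of_nat a) i"
proof (induction i arbitrary: a b m)
  case 0
  then show ?case by (simp add: ffact_c_def)
next
  case (Suc i)
  have IH: "poly (rodrigues_poly i (a-1) (b-1) (m-2)) 0 = ffact_c (of_nat (b-1)) i * ffact_c (of_nat (m-2) - of_nat (a-1)) i"
    using Suc by auto
  have e1: "of_nat (b-1) = (of_nat b - 1 :: complex)" "of_nat (m-2) - of_nat (a-1) = (of_nat m - of_nat a - 1 :: complex)"
    using Suc.prems by (auto simp: of_nat_diff)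
  have ff: "ffact_c x (Suc i) = x * ffact_c (x - 1) i" for x
    unfolding ffact_c_def prod.lessThan_Suc_shift by (simp add: algebra_simps)
  show ?case
    unfolding rodrigues_poly.simps poly_diff poly_mult IH e1 ff by (simp add: algebra_simps)
qed

lemma csubspace_zero: "csubspace V \<Longrightarrow> (\<lambda>_. 0) \<in> V"
  unfolding csubspace_def by auto

lemma csubspace_add: "csubspace V \<Longrightarrow> \<phi> \<in> V \<Longrightarrow> \<psi> \<in> V \<Longrightarrow> (\<lambda>x. \<phi> x + \<psi> x) \<in> V"
  unfolding csubspace_def by auto

lemma csubspace_scale: "csubspace V \<Longrightarrow> \<psi> \<in> V \<Longrightarrow> (\<lambda>x. c * \<psi> x) \<in> V"
  unfolding csubspace_def by auto

lemma csubspace_lin: "csubspace V \<Longrightarrow> \<phi> \<in> V \<Longrightarrow> \<psi> \<in> V \<Longrightarrow> (\<lambda>x. c * \<phi> x + d * \<psi> x) \<in> V"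
  by (intro csubspace_add csubspace_scale)

lemma csubspace_sum:
  assumes V: "csubspace V"
  shows "finite F \<Longrightarrow> (\<And>f. f \<in> F \<Longrightarrow> g f \<in> V) \<Longrightarrow> (\<lambda>x. \<Sum>f\<in>F. g f x) \<in> V"
proof (induction F rule: finite_induct)
  case empty
  then show ?case using V by (simp add: csubspace_zero)
next
  case (insert f F)
  then show ?case using V csubspace_add[of V "g f" "\<lambda>x. \<Sum>f\<in>F. g f x"] by simp
qed

lemma cspan_superset: "S \<subseteq> cspan S"
proof
  fix f assume "f \<in> S"
  then show "f \<in> cspan S"
    unfolding cspan_def by (intro CollectI exI[of _ "{f}"] exI[of _ "\<lambda>_. 1"]) auto
qed

lemma cspan_least: "csubspace V \<Longrightarrow> S \<subseteq> V \<Longrightarrow> cspan S \<subseteq> V"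
  unfolding cspan_def
  by (auto intro!: csubspace_sum csubspace_scale)

lemma sum_if_mem_subset: "finite A \<Longrightarrow> B \<subseteq> A \<Longrightarrow> (\<Sum>x\<in>A. if x \<in> B then g x else 0) = sum g B"
  using sum.inter_restrict[of A g B] by (simp add: Int_absorb1)

lemma csubspace_cspan: "csubspace (cspan S)"
  unfolding csubspace_def
proof (intro conjI ballI allI)
  show "(\<lambda>_. 0) \<in> cspan S" unfolding cspan_def by (intro CollectI exI[of _ "{}"]) auto
next
  fix \<phi> \<psi> assume A: "\<phi> \<in> cspan S" "\<psi> \<in> cspan S"
  obtain F1 c1 where F1: "finite F1" "F1 \<subseteq> S" "\<phi> = (\<lambda>x. \<Sum>f\<in>F1. c1 f * f x)"
    using A(1) unfolding cspan_def by blast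
  obtain F2 c2 where F2: "finite F2" "F2 \<subseteq> S" "\<psi> = (\<lambda>x. \<Sum>f\<in>F2. c2 f * f x)"
    using A(2) unfolding cspan_def by blast
  note F = F1 F2
  define c where "c f = (if f \<in> F1 then c1 f else 0) + (if f \<in> F2 then c2 f else 0)" for f
  have "(\<lambda>x. \<phi> x + \<psi> x) = (\<lambda>x. \<Sum>f\<in>F1 \<union> F2. c f * f x)"
  proof
    fix x
    have "(\<Sum>f\<in>F1 \<union> F2. c f * f x) = (\<Sum>f\<in>F1 \<union> F2. (if f \<in> F1 then c1 f * f x else 0) + (if f \<in> F2 then c2 f * f x else 0))"
      by (rule sum.cong) (simp_all add: c_def distrib_right)
    also have "\<dots> = (\<Sum>f\<in>F1 \<union> F2. (if f \<in> F1 then c1 f * f x else 0)) + (\<Sum>f\<in>F1 \<union> F2. (if f \<in> F2 then c2 f * f x else 0))"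
      by (rule sum.distrib)
    also have "\<dots> = (\<Sum>f\<in>F1. c1 f * f x) + (\<Sum>f\<in>F2. c2 f * f x)"
      using F by (simp add: sum_if_mem_subset)
    finally show "\<phi> x + \<psi> x = (\<Sum>f\<in>F1 \<union> F2. c f * f x)" using F by simp
  qed
  then show "(\<lambda>x. \<phi> x + \<psi> x) \<in> cspan S" unfolding cspan_def using F
    by (intro CollectI exI[of _ "F1 \<union> F2"] exI[of _ c]) simp
next
  fix d \<psi> assume "\<psi> \<in> cspan S"
  then obtain F c where F: "finite F" "F \<subseteq> S" "\<psi> = (\<lambda>x. \<Sum>f\<in>F. c f * f x)" unfolding cspan_def by blast
  then have "(\<lambda>x. d * \<psi> x) = (\<lambda>x. \<Sum>f\<in>F. (d * c f) * f x)" by (simp add: sum_distrib_left mult.assoc)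
  then show "(\<lambda>x. d * \<psi> x) \<in> cspan S" unfolding cspan_def using F
    by (intro CollectI exI[of _ F] exI[of _ "\<lambda>f. d * c f"]) simp
qed

lemma Gsubspace_inter: "Gsubspace n V \<Longrightarrow> Gsubspace n W \<Longrightarrow> Gsubspace n (V \<inter> W)"
proof -
  assume A: "Gsubspace n V" "Gsubspace n W"
  have "csubspace V" "csubspace W" using A unfolding Gsubspace_def by auto
  then have "csubspace (V \<inter> W)" unfolding csubspace_def by simp
  then show ?thesis using A unfolding Gsubspace_def by auto
qed

lemma act_add: "act g (\<lambda>x. \<phi> x + \<psi> x) = (\<lambda>x. act g \<phi> x + act g \<psi> x)"
  by (simp add: act_def)

lemma act_scale: "act g (\<lambda>x. c * \<psi> x) = (\<lambda>x. c * act g \<psi> x)"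
  by (simp add: act_def)

lemma act_zero: "act g (\<lambda>_. 0) = (\<lambda>_. 0)"
  by (simp add: act_def)

lemma inner_L2_self: "inner_L2 n \<psi> \<psi> = of_real (\<Sum>x\<in>Pow {..<n}. (cmod (\<psi> x))\<^sup>2)"
  unfolding inner_L2_def of_real_sum complex_norm_square ..

lemma Re_inner_L2_self: "(\<Sum>x\<in>Pow {..<n}. (cmod (\<psi> x))\<^sup>2) = Re (inner_L2 n \<psi> \<psi>)"
  unfolding inner_L2_def Re_sum complex_norm_square[symmetric] Re_complex_of_real ..

lemma inner_L2_self_eq_0:
  assumes "\<psi> \<in> L2X n" "inner_L2 n \<psi> \<psi> = 0"
  shows "\<psi> = (\<lambda>_. 0)"
proof
  fix x
  have "(\<Sum>x\<in>Pow {..<n}. (cmod (\<psi> x))\<^sup>2) = 0" unfolding Re_inner_L2_self assms(2) by simp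
  then have "\<forall>x\<in>Pow {..<n}. (cmod (\<psi> x))\<^sup>2 = 0" by (subst (asm) sum_nonneg_eq_0_iff) auto
  then show "\<psi> x = 0" using assms(1) unfolding L2X_def by (cases "x \<subseteq> {..<n}") auto
qed

lemma inner_L2_sum_left: "inner_L2 n (\<lambda>x. \<Sum>f\<in>F. c f * h f x) \<phi> = (\<Sum>f\<in>F. c f * inner_L2 n (h f) \<phi>)"
  unfolding inner_L2_def by (simp add: sum_distrib_left sum_distrib_right mult.assoc sum.swap[of _ F])

lemma inner_L2_sum_right: "inner_L2 n \<phi> (\<lambda>x. \<Sum>f\<in>F. c f * h f x) = (\<Sum>f\<in>F. cnj (c f) * inner_L2 n \<phi> (h f))"
  unfolding inner_L2_def by (simp add: sum_distrib_left sum_distrib_right algebra_simps sum.swap[of _ F])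

lemma inner_L2_lin_left: "inner_L2 n (\<lambda>x. c * \<phi> x + d * \<psi> x) \<theta> = c * inner_L2 n \<phi> \<theta> + d * inner_L2 n \<psi> \<theta>"
  unfolding inner_L2_def by (simp add: sum.distrib sum_distrib_left algebra_simps)

lemma inner_L2_lin_right: "inner_L2 n \<theta> (\<lambda>x. c * \<phi> x + d * \<psi> x) = cnj c * inner_L2 n \<theta> \<phi> + cnj d * inner_L2 n \<theta> \<psi>"
  unfolding inner_L2_def by (simp add: sum.distrib sum_distrib_left algebra_simps)

lemma cnj_inner_L2: "cnj (inner_L2 n \<phi> \<psi>) = inner_L2 n \<psi> \<phi>"
  unfolding inner_L2_def by (simp add: mult.commute)

lemma inner_L2_cspan_eq_0:
  assumes "\<psi> \<in> cspan S" "\<And>f. f \<in> S \<Longrightarrow> inner_L2 n \<phi> f = 0"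
  shows "inner_L2 n \<phi> \<psi> = 0"
proof -
  obtain F c where F: "finite F" "F \<subseteq> S" "\<psi> = (\<lambda>x. \<Sum>f\<in>F. c f * f x)" using assms(1) unfolding cspan_def by blast
  have "\<forall>f\<in>F. cnj (c f) * inner_L2 n \<phi> f = 0" using F assms(2) by auto
  then show ?thesis unfolding F(3) inner_L2_sum_right by (simp add: sum.neutral)
qed

lemma csubspace_supported: "csubspace {\<psi>. \<forall>x. \<psi> x \<noteq> 0 \<longrightarrow> P x}"
proof -
  have "\<phi> x + \<psi> x \<noteq> 0 \<Longrightarrow> \<phi> x \<noteq> 0 \<or> \<psi> x \<noteq> 0" for \<phi> \<psi> :: "nat set \<Rightarrow> complex" and x
    by auto
  then show ?thesis unfolding csubspace_def by fastforce
qed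

lemma csubspace_L2: "csubspace (L2 n r)"
  unfolding L2_def by (rule csubspace_supported)

lemma csubspace_L2X: "csubspace (L2X n)"
  unfolding L2X_def by (rule csubspace_supported)

lemma L2_sub_L2X: "L2 n r \<subseteq> L2X n"
  unfolding L2_def L2X_def by auto

lemma inner_L2_self_pos:
  assumes "\<psi> \<in> L2X n" "\<psi> \<noteq> (\<lambda>_. 0)"
  obtains R where "R > 0" "inner_L2 n \<psi> \<psi> = of_real R"
proof
  define R where "R = (\<Sum>x\<in>Pow {..<n}. (cmod (\<psi> x))\<^sup>2)"
  show "inner_L2 n \<psi> \<psi> = of_real R" unfolding R_def by (rule inner_L2_self)
  moreover have "R \<ge> 0" unfolding R_def by (intro sum_nonneg) auto
  moreover have "inner_L2 n \<psi> \<psi> \<noteq> 0" using inner_L2_self_eq_0 assms by blast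
  ultimately show "R > 0" by fastforce
qed

definition layer :: "nat \<Rightarrow> nat \<Rightarrow> nat set set" where
  "layer n r = {x. x \<subseteq> {..<n} \<and> card x = r}"

lemma finite_layer: "finite (layer n r)"
  unfolding layer_def by (rule finite_subset[of _ "Pow {..<n}"]) auto

lemma layer_subset_Pow: "layer n r \<subseteq> Pow {..<n}"
  unfolding layer_def by auto

lemma L2_outside_layer: "\<psi> \<in> L2 n r \<Longrightarrow> x \<notin> layer n r \<Longrightarrow> \<psi> x = 0"
  unfolding L2_def layer_def by auto

lemma image_permutes_layer: "g permutes {..<n} \<Longrightarrow> g ` x \<in> layer n r \<longleftrightarrow> x \<in> layer n r"
proof -
  assume g: "g permutes {..<n}"
  have "g ` x \<subseteq> {..<n} \<longleftrightarrow> x \<subseteq> {..<n}" using permutes_in_image[OF g] by auto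
  moreover have "card (g ` x) = card x" by (rule card_image) (rule inj_on_subset[OF permutes_inj[OF g]], simp)
  ultimately show ?thesis unfolding layer_def by auto
qed

section \<open>Tableaux, polytabloids and the Specht module\<close>

(* A tableau is given by its s columns {a i, b i}; swapped_row s a b E is its second row after
   the columns in E have been swapped, i.e. a tabloid of the column orbit. *)
definition column_pick :: "(nat \<Rightarrow> nat) \<Rightarrow> (nat \<Rightarrow> nat) \<Rightarrow> nat set \<Rightarrow> nat \<Rightarrow> nat" where
  "column_pick a b E i = (if i \<in> E then a i else b i)"

definition swapped_row :: "nat \<Rightarrow> (nat \<Rightarrow> nat) \<Rightarrow> (nat \<Rightarrow> nat) \<Rightarrow> nat set \<Rightarrow> nat set" where
  "swapped_row s a b E = column_pick a b E ` {..<s}"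

definition tableau :: "nat \<Rightarrow> nat \<Rightarrow> (nat \<Rightarrow> nat) \<Rightarrow> (nat \<Rightarrow> nat) \<Rightarrow> bool" where
  "tableau n s a b \<longleftrightarrow> (\<forall>i<s. a i < n \<and> b i < n) \<and> inj_on a {..<s} \<and> inj_on b {..<s}
      \<and> a ` {..<s} \<inter> b ` {..<s} = {}"

definition sym_diff :: "nat set \<Rightarrow> nat set \<Rightarrow> nat set" where
  "sym_diff E F = (E - F) \<union> (F - E)"

definition column_swap :: "nat \<Rightarrow> (nat \<Rightarrow> nat) \<Rightarrow> (nat \<Rightarrow> nat) \<Rightarrow> nat set \<Rightarrow> nat \<Rightarrow> nat" where
  "column_swap s a b F z = (if \<exists>i\<in>F. z = a i then b (SOME i. i \<in> F \<and> z = a i)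
      else if \<exists>i\<in>F. z = b i then a (SOME i. i \<in> F \<and> z = b i) else z)"

lemma polytabloid_eq_sum: "polytabloid s a b = (\<lambda>x. \<Sum>E\<in>Pow {..<s}. (-1) ^ card E * (if x = swapped_row s a b E then 1 else 0))"
  by (simp add: polytabloid_def swapped_row_def column_pick_def fun_eq_iff)

lemma sym_diff_sym_diff: "sym_diff (sym_diff E F) F = E"
  unfolding sym_diff_def by auto

lemma card_sym_diff: "finite E \<Longrightarrow> finite F \<Longrightarrow> card (sym_diff E F) + 2 * card (E \<inter> F) = card E + card F"
proof -
  assume f: "finite E" "finite F"
  have "card (sym_diff E F) = card (E - F) + card (F - E)"
    unfolding sym_diff_def using f by (intro card_Un_disjoint) auto
  moreover have "card (E - F) + card (E \<inter> F) = card E"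
    using f by (metis Diff_Diff_Int Diff_subset card_Diff_subset card_mono Int_lower1 finite_Diff add.commute le_add_diff_inverse Int_commute inf.absorb_iff2 card_Un_disjoint Diff_disjoint Un_Diff_Int)
  moreover have "card (F - E) + card (E \<inter> F) = card F"
    using f by (metis Int_commute card_Diff_subset_Int card_mono Int_lower1 finite_Int le_add_diff_inverse2 Diff_Diff_Int Diff_subset card_Diff_subset)
  ultimately show ?thesis by simp
qed

lemma sign_sym_diff: "finite E \<Longrightarrow> finite F \<Longrightarrow> (-1::complex) ^ card (sym_diff E F) = (-1) ^ card E * (-1) ^ card F"
proof -
  assume f: "finite E" "finite F"
  have "(-1::complex) ^ card (sym_diff E F) = (-1) ^ (card (sym_diff E F) + 2 * card (E \<inter> F))"
    by (simp add: power_add power_mult)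
  also have "\<dots> = (-1) ^ (card E + card F)" using card_sym_diff[OF f] by simp
  finally show ?thesis by (simp add: power_add)
qed

lemma sum_sign_sym_diff_reindex:
  assumes "finite I" "F \<subseteq> I"
  shows "(\<Sum>E\<in>Pow I. (-1) ^ card E * G (sym_diff E F)) = (-1) ^ card F * (\<Sum>E\<in>Pow I. (-1) ^ card E * (G E :: complex))"
proof -
  have fF: "finite F" using assms finite_subset by blast
  have "(\<Sum>E\<in>Pow I. (-1) ^ card E * G (sym_diff E F)) = (\<Sum>E\<in>Pow I. (-1) ^ card (sym_diff E F) * G E)"
    apply (rule sum.reindex_bij_witness[where i="\<lambda>E. sym_diff E F" and j="\<lambda>E. sym_diff E F"])
    subgoal by (simp add: sym_diff_sym_diff)
    subgoal using assms by (auto simp: sym_diff_def)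
    subgoal by (simp add: sym_diff_sym_diff)
    subgoal using assms by (auto simp: sym_diff_def)
    subgoal by (simp add: sym_diff_sym_diff)
    done
  also have "\<dots> = (\<Sum>E\<in>Pow I. (-1) ^ card F * ((-1) ^ card E * G E))"
  proof (rule sum.cong)
    fix E assume "E \<in> Pow I"
    then have "finite E" using assms finite_subset by blast
    then show "(-1) ^ card (sym_diff E F) * G E = (-1) ^ card F * ((-1) ^ card E * G E)"
      using sign_sym_diff[of E F] fF by simp
  qed simp
  finally show ?thesis by (simp add: sum_distrib_left)
qed

lemma image_inv_eq_iff: "bij g \<Longrightarrow> (inv g ` x = Y) \<longleftrightarrow> (x = g ` Y)"
  by (metis bij_def image_f_inv_f image_inv_f_f surj_imp_inj_inv inj_imp_surj_inv bij_image_Collect_eq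
      image_inv_into_cancel subset_UNIV)

lemma act_polytabloid: "bij g \<Longrightarrow> act g (polytabloid s a b) = polytabloid s (g \<circ> a) (g \<circ> b)"
proof -
  assume g: "bij g"
  have "swapped_row s (g \<circ> a) (g \<circ> b) E = g ` swapped_row s a b E" for E
    unfolding swapped_row_def column_pick_def image_image by (rule image_cong) auto
  then show ?thesis
    unfolding polytabloid_eq_sum act_def using image_inv_eq_iff[OF g] by simp
qed

lemma polytabloid_cong: "(\<And>i. i < s \<Longrightarrow> a' i = a i \<and> b' i = b i) \<Longrightarrow> polytabloid s a' b' = polytabloid s a b"
  unfolding polytabloid_def by (intro ext sum.cong refl) (auto intro!: image_cong)

lemma tableau_entry_cases:
  obtains (top) j where "j < s" "z = a j" | (bot) j where "j < s" "z = b j"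
    | (other) "z \<notin> a ` {..<s}" "z \<notin> b ` {..<s}"
  by auto

lemma sym_diff_commute: "sym_diff E F = sym_diff F E"
  unfolding sym_diff_def by auto

context
  fixes n s :: nat and a b :: "nat \<Rightarrow> nat"
  assumes T: "tableau n s a b"
begin

lemma tableau_less: "i < s \<Longrightarrow> a i < n" "i < s \<Longrightarrow> b i < n"
  using T unfolding tableau_def by auto

lemma tableau_inj: "i < s \<Longrightarrow> j < s \<Longrightarrow> a i = a j \<longleftrightarrow> i = j" "i < s \<Longrightarrow> j < s \<Longrightarrow> b i = b j \<longleftrightarrow> i = j"
  using T unfolding tableau_def inj_on_def by auto

lemma tableau_disjoint: "i < s \<Longrightarrow> j < s \<Longrightarrow> a i \<noteq> b j"
  using T unfolding tableau_def by auto

lemma column_swap_top: "F \<subseteq> {..<s} \<Longrightarrow> i < s \<Longrightarrow> column_swap s a b F (a i) = (if i \<in> F then b i else a i)"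
proof -
  assume F: "F \<subseteq> {..<s}" and i: "i < s"
  show ?thesis
  proof (cases "i \<in> F")
    case True
    have "(SOME j. j \<in> F \<and> a i = a j) = i"
      using True F i tableau_inj(1)[of i] by (intro some_equality) auto
    then show ?thesis unfolding column_swap_def using True by auto
  next
    case False
    have "\<not> (\<exists>j\<in>F. a i = a j)" using False F i tableau_inj(1)[of i] by auto
    moreover have "\<not> (\<exists>j\<in>F. a i = b j)" using F i tableau_disjoint by blast
    ultimately show ?thesis unfolding column_swap_def using False by simp
  qed
qed

lemma column_swap_bot: "F \<subseteq> {..<s} \<Longrightarrow> i < s \<Longrightarrow> column_swap s a b F (b i) = (if i \<in> F then a i else b i)"
proof -
  assume F: "F \<subseteq> {..<s}" and i: "i < s"
  have na: "\<not> (\<exists>j\<in>F. b i = a j)" using F i tableau_disjoint by (metis lessThan_iff subsetD)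
  show ?thesis
  proof (cases "i \<in> F")
    case True
    have "(SOME j. j \<in> F \<and> b i = b j) = i"
      using True F i tableau_inj(2)[of i] by (intro some_equality) auto
    then show ?thesis unfolding column_swap_def using True na by auto
  next
    case False
    have "\<not> (\<exists>j\<in>F. b i = b j)" using False F i tableau_inj(2)[of i] by auto
    then show ?thesis unfolding column_swap_def using False na by simp
  qed
qed

lemma column_swap_other: "F \<subseteq> {..<s} \<Longrightarrow> z \<notin> a ` {..<s} \<Longrightarrow> z \<notin> b ` {..<s} \<Longrightarrow> column_swap s a b F z = z"
  unfolding column_swap_def by auto

lemma column_swap_involution: "F \<subseteq> {..<s} \<Longrightarrow> column_swap s a b F (column_swap s a b F z) = z"
  by (cases rule: tableau_entry_cases[where z=z and s=s and a=a and b=b]) (auto simp: column_swap_top column_swap_bot column_swap_other)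

lemma column_swap_less: "F \<subseteq> {..<s} \<Longrightarrow> z < n \<Longrightarrow> column_swap s a b F z < n"
  by (cases rule: tableau_entry_cases[where z=z and s=s and a=a and b=b]) (auto simp: column_swap_top column_swap_bot column_swap_other tableau_less)

lemma column_swap_outside: "F \<subseteq> {..<s} \<Longrightarrow> z \<notin> {..<n} \<Longrightarrow> column_swap s a b F z = z"
  by (rule column_swap_other) (use tableau_less in auto)

lemma column_swap_permutes: "F \<subseteq> {..<s} \<Longrightarrow> column_swap s a b F permutes {..<n}"
  by (rule bij_imp_permutes, rule bij_betw_byWitness[where f'="column_swap s a b F"])
     (auto simp: column_swap_involution column_swap_less column_swap_outside)

lemma column_swap_comp_self: "F \<subseteq> {..<s} \<Longrightarrow> column_swap s a b F \<circ> column_swap s a b F = id"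
  by (auto simp: column_swap_involution)

lemma inv_column_swap: "F \<subseteq> {..<s} \<Longrightarrow> inv (column_swap s a b F) = column_swap s a b F"
  by (rule inv_unique_comp) (auto simp: column_swap_comp_self)

lemma column_swap_column_pick: "E \<subseteq> {..<s} \<Longrightarrow> F \<subseteq> {..<s} \<Longrightarrow> i < s \<Longrightarrow> column_swap s a b F (column_pick a b E i) = column_pick a b (sym_diff E F) i"
  unfolding column_pick_def sym_diff_def by (auto simp: column_swap_top column_swap_bot)

lemma column_swap_swapped_row: "E \<subseteq> {..<s} \<Longrightarrow> F \<subseteq> {..<s} \<Longrightarrow> column_swap s a b F ` swapped_row s a b E = swapped_row s a b (sym_diff E F)"
  unfolding swapped_row_def image_image by (rule image_cong) (auto simp: column_swap_column_pick)

lemma inj_on_column_pick: "inj_on (column_pick a b E) {..<s}"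
  unfolding inj_on_def column_pick_def using tableau_inj tableau_disjoint by (auto split: if_splits) (metis)+

lemma card_swapped_row: "card (swapped_row s a b E) = s"
  unfolding swapped_row_def using card_image[OF inj_on_column_pick] by simp

lemma swapped_row_subset: "swapped_row s a b E \<subseteq> {..<n}"
  unfolding swapped_row_def column_pick_def using tableau_less by auto

lemma swapped_row_inj: "E \<subseteq> {..<s} \<Longrightarrow> F \<subseteq> {..<s} \<Longrightarrow> swapped_row s a b E = swapped_row s a b F \<Longrightarrow> E = F"
proof -
  assume E: "E \<subseteq> {..<s}" and F: "F \<subseteq> {..<s}" and eq: "swapped_row s a b E = swapped_row s a b F"
  have *: "E \<subseteq> F" if E: "E \<subseteq> {..<s}" and F: "F \<subseteq> {..<s}" and eq: "swapped_row s a b E = swapped_row s a b F" for E F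
  proof
    fix i assume "i \<in> E"
    then have i: "i < s" using E by auto
    have "a i \<in> swapped_row s a b E" unfolding swapped_row_def column_pick_def using \<open>i \<in> E\<close> i by force
    then obtain j where j: "j < s" "a i = column_pick a b F j" using eq unfolding swapped_row_def by auto
    show "i \<in> F"
    proof (cases "j \<in> F")
      case True
      then show ?thesis using j i tableau_inj(1) unfolding column_pick_def by auto
    next
      case False
      then show ?thesis using j i tableau_disjoint unfolding column_pick_def by auto
    qed
  qed
  show ?thesis using *[OF E F eq] *[OF F E eq[symmetric]] by auto
qed

lemma polytabloid_at_swapped_row: "F \<subseteq> {..<s} \<Longrightarrow> polytabloid s a b (swapped_row s a b F) = (-1) ^ card F"
proof -
  assume F: "F \<subseteq> {..<s}"
  have "polytabloid s a b (swapped_row s a b F) = (\<Sum>E\<in>Pow {..<s}. (if E = F then (-1) ^ card E else 0))"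
    unfolding polytabloid_eq_sum by (rule sum.cong) (use swapped_row_inj F in auto)
  also have "\<dots> = (-1) ^ card F" using F by (simp add: sum.delta)
  finally show ?thesis .
qed

lemma polytabloid_outside: "(\<And>F. F \<subseteq> {..<s} \<Longrightarrow> x \<noteq> swapped_row s a b F) \<Longrightarrow> polytabloid s a b x = 0"
  unfolding polytabloid_eq_sum by (intro sum.neutral) auto

lemma polytabloid_L2: "polytabloid s a b \<in> L2 n s"
  unfolding L2_def
proof (intro CollectI allI impI)
  fix x assume "polytabloid s a b x \<noteq> 0"
  then obtain F where "F \<subseteq> {..<s}" "x = swapped_row s a b F" using polytabloid_outside by blast
  then show "x \<subseteq> {..<n} \<and> card x = s" using swapped_row_subset card_swapped_row by auto
qed

lemma polytabloid_at_bot_row: "polytabloid s a b (swapped_row s a b {}) = 1"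
  using polytabloid_at_swapped_row[of "{}"] by simp

lemma polytabloid_nonzero: "polytabloid s a b \<noteq> (\<lambda>_. 0)"
  using polytabloid_at_bot_row by (metis zero_neq_one)

lemma cnj_polytabloid: "cnj (polytabloid s a b x) = polytabloid s a b x"
  unfolding polytabloid_eq_sum cnj_sum by (intro sum.cong) auto

lemma tableau_comp_permutes: "g permutes {..<n} \<Longrightarrow> tableau n s (g \<circ> a) (g \<circ> b)"
proof -
  assume g: "g permutes {..<n}"
  have inj: "inj g" using g by (rule permutes_inj)
  show ?thesis unfolding tableau_def
  proof (intro conjI allI impI)
    fix i assume "i < s"
    then show "(g \<circ> a) i < n" "(g \<circ> b) i < n" using tableau_less g permutes_in_image[OF g] by auto
  next
    show "inj_on (g \<circ> a) {..<s}" "inj_on (g \<circ> b) {..<s}"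
      using T inj unfolding tableau_def by (auto intro: comp_inj_on inj_on_subset)
  next
    show "(g \<circ> a) ` {..<s} \<inter> (g \<circ> b) ` {..<s} = {}"
      using T unfolding tableau_def by (auto simp: inj_eq[OF inj])
  qed
qed

lemma act_column_swap_polytabloid: "F \<subseteq> {..<s} \<Longrightarrow> act (column_swap s a b F) (polytabloid s a b) = (\<lambda>x. (-1) ^ card F * polytabloid s a b x)"
proof
  fix x assume F: "F \<subseteq> {..<s}"
  have eq: "(column_swap s a b F ` x = swapped_row s a b E) \<longleftrightarrow> (x = swapped_row s a b (sym_diff E F))" if "E \<subseteq> {..<s}" for E
    using image_inv_eq_iff[OF permutes_bij[OF column_swap_permutes[OF F]], of x] column_swap_swapped_row[OF that F]
    unfolding inv_column_swap[OF F] by simp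
  have "act (column_swap s a b F) (polytabloid s a b) x = (\<Sum>E\<in>Pow {..<s}. (-1) ^ card E * (if x = swapped_row s a b (sym_diff E F) then 1 else 0))"
    unfolding act_def inv_column_swap[OF F] polytabloid_eq_sum by (intro sum.cong refl) (simp add: eq)
  also have "\<dots> = (-1) ^ card F * polytabloid s a b x"
    unfolding polytabloid_eq_sum by (rule sum_sign_sym_diff_reindex[where G="\<lambda>E. if x = swapped_row s a b E then 1 else 0"]) (use F in auto)
  finally show "act (column_swap s a b F) (polytabloid s a b) x = (-1) ^ card F * polytabloid s a b x" .
qed

lemma act_polytabloid_fixing: "\<pi> permutes {..<n} \<Longrightarrow> (\<And>i. i < s \<Longrightarrow> \<pi> (a i) = a i \<and> \<pi> (b i) = b i) \<Longrightarrow>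
    act \<pi> (polytabloid s a b) = polytabloid s a b"
proof -
  assume p: "\<pi> permutes {..<n}" and fx: "\<And>i. i < s \<Longrightarrow> \<pi> (a i) = a i \<and> \<pi> (b i) = b i"
  have "act \<pi> (polytabloid s a b) = polytabloid s (\<pi> \<circ> a) (\<pi> \<circ> b)"
    by (rule act_polytabloid[OF permutes_bij[OF p]])
  also have "\<dots> = polytabloid s a b" by (rule polytabloid_cong) (use fx in simp)
  finally show ?thesis .
qed

end

lemma permutes_extend:
  assumes S: "finite S" and D: "D \<subseteq> S" and inj: "inj_on h D" and hD: "h ` D \<subseteq> S"
  shows "\<exists>g. g permutes S \<and> (\<forall>x\<in>D. g x = h x)"
proof -
  have fD: "finite D" using S D finite_subset by blast
  have "card (S - D) = card (S - h ` D)"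
    using card_image[OF inj] S D hD fD by (simp add: card_Diff_subset)
  then obtain k where k: "bij_betw k (S - D) (S - h ` D)"
    using finite_same_card_bij[of "S - D" "S - h ` D"] S by auto
  define g where "g x = (if x \<in> D then h x else if x \<in> S then k x else x)" for x
  have "bij_betw g S S"
  proof -
    have "bij_betw g D (h ` D)" unfolding g_def using inj
      by (simp add: bij_betw_def inj_on_def)
    moreover have "bij_betw g (S - D) (S - h ` D)" unfolding g_def
      using k by (rule bij_betw_cong[THEN iffD1, rotated]) auto
    ultimately have "bij_betw g (D \<union> (S - D)) (h ` D \<union> (S - h ` D))"
      by (rule bij_betw_combine) blast
    moreover have "D \<union> (S - D) = S" "h ` D \<union> (S - h ` D) = S" using D hD by auto
    ultimately show ?thesis by simp
  qed
  moreover have "x \<notin> S \<Longrightarrow> g x = x" for x unfolding g_def using D by auto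
  ultimately have "g permutes S" by (rule bij_imp_permutes)
  then show ?thesis unfolding g_def by auto
qed

lemma inj_on_extend_id:
  assumes "inj_on k X" "\<And>x. x \<in> X \<Longrightarrow> k x \<notin> E - X"
  shows "inj_on (\<lambda>z. if z \<in> X then k z else z) (E \<union> X)"
  using assms unfolding inj_on_def by (metis DiffI UnE)

lemma tableau_transport:
  assumes T: "tableau n s a b" and T': "tableau n s a' b'"
  shows "\<exists>g. g permutes {..<n} \<and> (\<forall>i<s. g (a i) = a' i \<and> g (b i) = b' i)"
proof -
  define D where "D = a ` {..<s} \<union> b ` {..<s}"
  define h where "h z = (if z \<in> a ` {..<s} then a' (the_inv_into {..<s} a z) else b' (the_inv_into {..<s} b z))" for z
  have ia: "inj_on a {..<s}" "inj_on b {..<s}" "inj_on a' {..<s}" "inj_on b' {..<s}"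
    using T T' unfolding tableau_def by auto
  have ha: "h (a i) = a' i" if "i < s" for i
    unfolding h_def using that the_inv_into_f_f[OF ia(1)] by auto
  have hb: "h (b i) = b' i" if "i < s" for i
  proof -
    have "b i \<notin> a ` {..<s}" using tableau_disjoint[OF T] that by (metis imageE lessThan_iff)
    then show ?thesis unfolding h_def using that the_inv_into_f_f[OF ia(2)] by auto
  qed
  have "inj_on h D"
  proof (rule inj_onI)
    fix x y assume "x \<in> D" "y \<in> D" "h x = h y"
    then show "x = y" unfolding D_def using ha hb tableau_inj[OF T] tableau_inj[OF T'] tableau_disjoint[OF T'] by (auto) (metis)+
  qed
  moreover have "D \<subseteq> {..<n}" unfolding D_def using tableau_less[OF T] by auto
  moreover have "h ` D \<subseteq> {..<n}" unfolding D_def using tableau_less[OF T'] ha hb by auto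
  ultimately obtain g where g: "g permutes {..<n}" "\<forall>x\<in>D. g x = h x"
    using permutes_extend[of "{..<n}" D h] by auto
  then show ?thesis using ha hb unfolding D_def by auto
qed

definition std_top :: "nat \<Rightarrow> nat \<Rightarrow> nat" where
  "std_top s = restrict (\<lambda>i. i) {..<s}"

definition std_bot :: "nat \<Rightarrow> nat \<Rightarrow> nat" where
  "std_bot s = restrict (\<lambda>i. s + i) {..<s}"

lemma tableau_std: "2 * s \<le> n \<Longrightarrow> tableau n s (std_top s) (std_bot s)"
  unfolding tableau_def std_top_def std_bot_def inj_on_def by auto

abbreviation std_polytabloid :: "nat \<Rightarrow> nat set \<Rightarrow> complex" where
  "std_polytabloid s \<equiv> polytabloid s (std_top s) (std_bot s)"

definition polytabloids :: "nat \<Rightarrow> nat \<Rightarrow> (nat set \<Rightarrow> complex) set" where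
  "polytabloids n s = {polytabloid s a b | a b. tableau n s a b}"

lemma Specht_eq_cspan: "Specht n s = cspan (polytabloids n s)"
  unfolding Specht_def polytabloids_def tableau_def ..

lemma polytabloids_L2: "polytabloids n s \<subseteq> L2 n s"
  unfolding polytabloids_def using polytabloid_L2 by blast

lemma Specht_L2: "Specht n s \<subseteq> L2 n s"
  unfolding Specht_eq_cspan by (rule cspan_least[OF csubspace_L2 polytabloids_L2])

lemma Specht_L2X: "Specht n s \<subseteq> L2X n"
  using Specht_L2 L2_sub_L2X by blast

lemma csubspace_Specht: "csubspace (Specht n s)"
  unfolding Specht_eq_cspan by (rule csubspace_cspan)

lemma polytabloids_Specht: "polytabloids n s \<subseteq> Specht n s"
  unfolding Specht_eq_cspan by (rule cspan_superset)

lemma polytabloid_Specht: "tableau n s a b \<Longrightarrow> polytabloid s a b \<in> Specht n s"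
  using polytabloids_Specht unfolding polytabloids_def by blast

lemma csubspace_preimage_act:
  "csubspace V \<Longrightarrow> csubspace {\<phi>. act g \<phi> \<in> V}"
  unfolding csubspace_def by (simp add: act_add act_scale act_zero)

lemma act_Specht: "g permutes {..<n} \<Longrightarrow> \<psi> \<in> Specht n s \<Longrightarrow> act g \<psi> \<in> Specht n s"
proof -
  assume g: "g permutes {..<n}" and p: "\<psi> \<in> Specht n s"
  have "polytabloids n s \<subseteq> {\<phi>. act g \<phi> \<in> Specht n s}"
  proof
    fix f assume "f \<in> polytabloids n s"
    then obtain a b where f: "f = polytabloid s a b" "tableau n s a b" unfolding polytabloids_def by blast
    have "act g f = polytabloid s (g \<circ> a) (g \<circ> b)" unfolding f(1) by (rule act_polytabloid[OF permutes_bij[OF g]])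
    then show "f \<in> {\<phi>. act g \<phi> \<in> Specht n s}" using polytabloid_Specht[OF tableau_comp_permutes[OF f(2) g]] by simp
  qed
  then have "Specht n s \<subseteq> {\<phi>. act g \<phi> \<in> Specht n s}"
    unfolding Specht_eq_cspan[of n s] by (intro cspan_least csubspace_preimage_act csubspace_cspan)
      (simp add: Specht_eq_cspan)
  then show ?thesis using p by blast
qed

lemma Gsubspace_Specht: "Gsubspace n (Specht n s)"
  unfolding Gsubspace_def using Specht_L2X csubspace_Specht act_Specht by blast

lemma Specht_nonzero: "2 * s \<le> n \<Longrightarrow> Specht n s \<noteq> {\<lambda>_. 0}"
  using polytabloid_Specht[OF tableau_std] polytabloid_nonzero[OF tableau_std] by blast

definition column_antisym :: "nat \<Rightarrow> (nat \<Rightarrow> nat) \<Rightarrow> (nat \<Rightarrow> nat) \<Rightarrow> (nat set \<Rightarrow> complex) \<Rightarrow> (nat set \<Rightarrow> complex)" where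
  "column_antisym s a b w = (\<lambda>x. \<Sum>E\<in>Pow {..<s}. (-1) ^ card E * act (column_swap s a b E) w x)"

context
  fixes n s :: nat and a b :: "nat \<Rightarrow> nat"
  assumes T: "tableau n s a b"
begin

lemma inner_L2_polytabloid: "inner_L2 n w (polytabloid s a b) = (\<Sum>E\<in>Pow {..<s}. (-1) ^ card E * w (swapped_row s a b E))"
proof -
  have "inner_L2 n w (polytabloid s a b) = (\<Sum>x\<in>Pow {..<n}. \<Sum>E\<in>Pow {..<s}. (-1) ^ card E * (if x = swapped_row s a b E then w x else 0))"
    unfolding inner_L2_def cnj_polytabloid[OF T] unfolding polytabloid_eq_sum
    by (simp add: sum_distrib_left algebra_simps if_distrib cong: if_cong)
  also have "\<dots> = (\<Sum>E\<in>Pow {..<s}. \<Sum>x\<in>Pow {..<n}. (-1) ^ card E * (if x = swapped_row s a b E then w x else 0))"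
    by (rule sum.swap)
  also have "\<dots> = (\<Sum>E\<in>Pow {..<s}. (-1) ^ card E * w (swapped_row s a b E))"
  proof (rule sum.cong[OF refl])
    fix E
    show "(\<Sum>x\<in>Pow {..<n}. (-1) ^ card E * (if x = swapped_row s a b E then w x else 0)) = (-1) ^ card E * w (swapped_row s a b E)"
      by (simp add: sum_distrib_left[symmetric] sum.delta swapped_row_subset[OF T])
  qed
  finally show ?thesis .
qed

lemma column_swap_sym_diff_single: "E \<subseteq> {..<s} \<Longrightarrow> i < s \<Longrightarrow> column_swap s a b (sym_diff E {i}) z = column_swap s a b E (column_swap s a b {i} z)"
proof -
  assume E: "E \<subseteq> {..<s}" and i: "i < s"
  have sE: "sym_diff E {i} \<subseteq> {..<s}" using E i unfolding sym_diff_def by auto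
  have si: "{i} \<subseteq> {..<s}" using i by auto
  show ?thesis
  proof (cases rule: tableau_entry_cases[where z=z and s=s and a=a and b=b])
    case (top j)
    then show ?thesis using column_swap_top[OF T sE] column_swap_top[OF T si] column_swap_top[OF T E] column_swap_bot[OF T E] unfolding sym_diff_def by auto
  next
    case (bot j)
    then show ?thesis using column_swap_bot[OF T sE] column_swap_bot[OF T si] column_swap_top[OF T E] column_swap_bot[OF T E] unfolding sym_diff_def by auto
  next
    case other
    then show ?thesis using column_swap_other[OF T sE] column_swap_other[OF T si] column_swap_other[OF T E] by auto
  qed
qed

lemma column_swap_single_image:
  assumes i: "i < s" and x: "a i \<in> x \<longleftrightarrow> b i \<in> x"
  shows "column_swap s a b {i} ` x = x"
proof -
  have si: "{i} \<subseteq> {..<s}" using i by auto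
  have mem: "column_swap s a b {i} z \<in> x \<longleftrightarrow> z \<in> x" for z
  proof (cases rule: tableau_entry_cases[where z=z and s=s and a=a and b=b])
    case (top j)
    then show ?thesis using column_swap_top[OF T si] x by (cases "j = i") auto
  next
    case (bot j)
    then show ?thesis using column_swap_bot[OF T si] x by (cases "j = i") auto
  next
    case other
    then show ?thesis using column_swap_other[OF T si] by auto
  qed
  show ?thesis
  proof
    show "column_swap s a b {i} ` x \<subseteq> x" using mem by auto
    show "x \<subseteq> column_swap s a b {i} ` x"
    proof
      fix z assume "z \<in> x"
      then have "column_swap s a b {i} z \<in> x" using mem by simp
      moreover have "column_swap s a b {i} (column_swap s a b {i} z) = z" by (rule column_swap_involution[OF T si])
      ultimately show "z \<in> column_swap s a b {i} ` x" by (metis image_eqI)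
    qed
  qed
qed

lemma balanced_column_exists:
  assumes x: "x \<subseteq> {..<n}" "card x = s" and nS: "\<And>F. F \<subseteq> {..<s} \<Longrightarrow> x \<noteq> swapped_row s a b F"
  shows "\<exists>i<s. (a i \<in> x \<longleftrightarrow> b i \<in> x)"
proof (rule ccontr)
  assume "\<not> ?thesis"
  then have one: "\<And>i. i < s \<Longrightarrow> (a i \<in> x) \<noteq> (b i \<in> x)" by blast
  define F where "F = {i. i < s \<and> a i \<in> x}"
  have "swapped_row s a b F \<subseteq> x" unfolding swapped_row_def column_pick_def F_def using one by auto
  moreover have "finite x" using x finite_subset by blast
  moreover have "card (swapped_row s a b F) = card x" using card_swapped_row[OF T] x by simp
  ultimately have "swapped_row s a b F = x" using card_subset_eq[of x "swapped_row s a b F"] by blast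
  moreover have "F \<subseteq> {..<s}" unfolding F_def by auto
  ultimately show False using nS by metis
qed

lemma column_antisym_apply:
  "column_antisym s a b w x = (\<Sum>E\<in>Pow {..<s}. (-1) ^ card E * w (column_swap s a b E ` x))"
  unfolding column_antisym_def act_def by (intro sum.cong refl) (simp add: inv_column_swap[OF T])

lemma column_antisym_swapped_row:
  assumes F: "F \<subseteq> {..<s}"
  shows "column_antisym s a b w (swapped_row s a b F)
    = inner_L2 n w (polytabloid s a b) * polytabloid s a b (swapped_row s a b F)"
proof -
  have "column_antisym s a b w (swapped_row s a b F)
      = (\<Sum>E\<in>Pow {..<s}. (-1) ^ card E * w (swapped_row s a b (sym_diff E F)))"
    unfolding column_antisym_apply using F
    by (intro sum.cong refl) (simp add: column_swap_swapped_row[OF T] sym_diff_commute)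
  also have "\<dots> = (-1) ^ card F * (\<Sum>E\<in>Pow {..<s}. (-1) ^ card E * w (swapped_row s a b E))"
    by (rule sum_sign_sym_diff_reindex) (use F in auto)
  finally show ?thesis
    unfolding inner_L2_polytabloid polytabloid_at_swapped_row[OF T F] by (simp add: mult.commute)
qed

lemma column_antisym_outside:
  assumes w: "w \<in> L2 n s" and x: "\<And>F. F \<subseteq> {..<s} \<Longrightarrow> x \<noteq> swapped_row s a b F"
  shows "column_antisym s a b w x = 0"
proof (cases "x \<in> layer n s")
  case False
  have "w (column_swap s a b E ` x) = 0" if "E \<in> Pow {..<s}" for E
  proof (rule L2_outside_layer[OF w])
    have "column_swap s a b E permutes {..<n}" using that by (intro column_swap_permutes[OF T]) auto
    then show "column_swap s a b E ` x \<notin> layer n s" using False image_permutes_layer by blast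
  qed
  then show ?thesis unfolding column_antisym_apply by simp
next
  case True
  then obtain i where i: "i < s" "a i \<in> x \<longleftrightarrow> b i \<in> x"
    using balanced_column_exists x unfolding layer_def by blast
  \<comment> \<open>Swapping the balanced column i fixes x and flips every sign, so the sum is its own negative.\<close>
  have "(\<Sum>E\<in>Pow {..<s}. (-1) ^ card E * w (column_swap s a b (sym_diff E {i}) ` x))
      = (-1) ^ card {i} * (\<Sum>E\<in>Pow {..<s}. (-1) ^ card E * w (column_swap s a b E ` x))"
    by (rule sum_sign_sym_diff_reindex[where G="\<lambda>E. w (column_swap s a b E ` x)"]) (use i in auto)
  moreover have "column_swap s a b (sym_diff E {i}) ` x = column_swap s a b E ` x" if "E \<in> Pow {..<s}" for E
  proof -
    have "column_swap s a b (sym_diff E {i}) ` x = column_swap s a b E ` (column_swap s a b {i} ` x)"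
      using column_swap_sym_diff_single[of E i] that i by (auto simp: image_image)
    then show ?thesis using column_swap_single_image[OF i] by simp
  qed
  ultimately have "column_antisym s a b w x = - column_antisym s a b w x" unfolding column_antisym_apply by simp
  then show ?thesis by simp
qed

lemma column_antisym_eq:
  assumes w: "w \<in> L2 n s"
  shows "column_antisym s a b w = (\<lambda>x. inner_L2 n w (polytabloid s a b) * polytabloid s a b x)"
proof
  fix x
  show "column_antisym s a b w x = inner_L2 n w (polytabloid s a b) * polytabloid s a b x"
  proof (cases "\<exists>F. F \<subseteq> {..<s} \<and> x = swapped_row s a b F")
    case True
    then show ?thesis using column_antisym_swapped_row by blast
  next
    case False
    then show ?thesis using column_antisym_outside[OF w] polytabloid_outside[OF T] by auto
  qed
qed

lemma column_swap_normal_form: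
  assumes x: "x \<in> layer n r" and unbalanced: "\<And>i. i < s \<Longrightarrow> (a i \<in> x) \<noteq> (b i \<in> x)"
  defines "F \<equiv> {i. i < s \<and> a i \<in> x}"
  shows "column_swap s a b F ` x = b ` {..<s} \<union> (x - (a ` {..<s} \<union> b ` {..<s}))"
    (is "_ = ?B")
proof (rule subset_antisym)
  have F: "F \<subseteq> {..<s}" unfolding F_def by auto
  show "column_swap s a b F ` x \<subseteq> ?B"
  proof (rule image_subsetI)
    fix z assume z: "z \<in> x"
    show "column_swap s a b F z \<in> ?B"
    proof (cases rule: tableau_entry_cases[where z=z and s=s and a=a and b=b])
      case (top j)
      then have "j \<in> F" using z unfolding F_def by simp
      then show ?thesis using top column_swap_top[OF T F] by simp
    next
      case (bot j)
      then have "j \<notin> F" using z unbalanced unfolding F_def by simp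
      then show ?thesis using bot column_swap_bot[OF T F] by simp
    next
      case other
      then show ?thesis using z column_swap_other[OF T F] by simp
    qed
  qed
  show "?B \<subseteq> column_swap s a b F ` x"
  proof (rule subsetI)
    fix y assume y: "y \<in> ?B"
    show "y \<in> column_swap s a b F ` x"
    proof (cases "y \<in> b ` {..<s}")
      case True
      then obtain j where j: "j < s" "y = b j" by blast
      show ?thesis
      proof (cases "a j \<in> x")
        case True
        then have "column_swap s a b F (a j) = y" using j column_swap_top[OF T F] unfolding F_def by simp
        then show ?thesis using True by (metis image_eqI)
      next
        case False
        then have "b j \<in> x" "column_swap s a b F (b j) = y"
          using j unbalanced column_swap_bot[OF T F] unfolding F_def by auto
        then show ?thesis by (metis image_eqI)
      qed
    next
      case False
      then have "y \<in> x" "column_swap s a b F y = y" using y column_swap_other[OF T F] by auto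
      then show ?thesis by (metis image_eqI)
    qed
  qed
qed

end

lemma column_antisym_mem:
  "csubspace W \<Longrightarrow> (\<And>g. g permutes {..<n} \<Longrightarrow> act g w \<in> W) \<Longrightarrow> tableau n s a b \<Longrightarrow> column_antisym s a b w \<in> W"
  unfolding column_antisym_def
  by (intro csubspace_sum csubspace_scale) (auto intro: column_swap_permutes)

lemma Specht_subset_invariant:
  assumes W: "csubspace W" "\<And>g \<psi>. g permutes {..<n} \<Longrightarrow> \<psi> \<in> W \<Longrightarrow> act g \<psi> \<in> W"
    and T: "tableau n s a b" and e: "polytabloid s a b \<in> W"
  shows "Specht n s \<subseteq> W"
  unfolding Specht_eq_cspan
proof (rule cspan_least[OF W(1)], rule subsetI)
  fix f assume "f \<in> polytabloids n s"
  then obtain a' b' where f: "f = polytabloid s a' b'" "tableau n s a' b'" unfolding polytabloids_def by blast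
  obtain g where g: "g permutes {..<n}" "\<forall>i<s. g (a i) = a' i \<and> g (b i) = b' i"
    using tableau_transport[OF T f(2)] by blast
  have "act g (polytabloid s a b) = polytabloid s (g \<circ> a) (g \<circ> b)" by (rule act_polytabloid[OF permutes_bij[OF g(1)]])
  also have "\<dots> = f" unfolding f(1) by (rule polytabloid_cong) (use g in simp)
  finally show "f \<in> W" using W(2)[OF g(1) e] by simp
qed

lemma Gsubspace_contains_polytabloid:
  assumes W: "Gsubspace n W" "W \<subseteq> Specht n s" "W \<noteq> {\<lambda>_. 0}"
  obtains a b where "tableau n s a b" "polytabloid s a b \<in> W"
proof -
  have cW: "csubspace W" and iW: "\<And>g \<psi>. g permutes {..<n} \<Longrightarrow> \<psi> \<in> W \<Longrightarrow> act g \<psi> \<in> W"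
    using W(1) unfolding Gsubspace_def by auto
  obtain w where w: "w \<in> W" "w \<noteq> (\<lambda>_. 0)" using W(3) csubspace_zero[OF cW] by blast
  have wS: "w \<in> Specht n s" using w W(2) by blast
  have "inner_L2 n w w \<noteq> 0" using inner_L2_self_eq_0[of w n] w wS Specht_L2X by blast
  \<comment> \<open>w is not orthogonal to all polytabloids, and the column antisymmetrizer of that tableau
      projects w onto a nonzero multiple of its polytabloid.\<close>
  moreover have "inner_L2 n w w = 0" if "\<forall>f\<in>polytabloids n s. inner_L2 n w f = 0"
    by (rule inner_L2_cspan_eq_0[of w "polytabloids n s" n w]) (use wS that in \<open>auto simp: Specht_eq_cspan\<close>)
  ultimately obtain a b where ab: "tableau n s a b" "inner_L2 n w (polytabloid s a b) \<noteq> 0"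
    unfolding polytabloids_def by blast
  define c where "c = inner_L2 n w (polytabloid s a b)"
  have "column_antisym s a b w \<in> W" by (rule column_antisym_mem[OF cW _ ab(1)]) (use iW w in auto)
  moreover have "w \<in> L2 n s" using wS Specht_L2 by blast
  ultimately have "(\<lambda>x. c * polytabloid s a b x) \<in> W"
    unfolding c_def by (simp add: column_antisym_eq[OF ab(1)])
  then have "(\<lambda>x. inverse c * (c * polytabloid s a b x)) \<in> W" by (rule csubspace_scale[OF cW])
  moreover have "(\<lambda>x. inverse c * (c * polytabloid s a b x)) = polytabloid s a b"
    using ab(2) unfolding c_def by (intro ext) (simp add: mult.assoc[symmetric])
  ultimately show ?thesis using that ab(1) by simp
qed

theorem Girreducible_Specht:
  assumes s: "2 * s \<le> n"
  shows "Girreducible n (Specht n s)"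
  unfolding Girreducible_def
proof (intro conjI allI impI)
  show "Gsubspace n (Specht n s)" by (rule Gsubspace_Specht)
  show "Specht n s \<noteq> {\<lambda>_. 0}" by (rule Specht_nonzero[OF s])
next
  fix W assume W: "Gsubspace n W \<and> W \<subseteq> Specht n s"
  show "W = {\<lambda>_. 0} \<or> W = Specht n s"
  proof (cases "W = {\<lambda>_. 0}")
    case False
    then obtain a b where "tableau n s a b" "polytabloid s a b \<in> W"
      using Gsubspace_contains_polytabloid W by blast
    then have "Specht n s \<subseteq> W"
      using Specht_subset_invariant[of W] W unfolding Gsubspace_def by blast
    then show ?thesis using W by blast
  qed simp
qed

section \<open>Lifting the Specht module to the layers\<close>

definition subset_sum :: "nat \<Rightarrow> nat \<Rightarrow> (nat set \<Rightarrow> complex) \<Rightarrow> (nat set \<Rightarrow> complex)" where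
  "subset_sum n r \<psi> = (\<lambda>x. if x \<subseteq> {..<n} \<and> card x = r then \<Sum>z\<in>Pow x. \<psi> z else 0)"

lemma subset_sum_L2: "subset_sum n r \<psi> \<in> L2 n r"
  unfolding subset_sum_def L2_def by auto

lemma subset_sum_add: "subset_sum n r (\<lambda>x. \<phi> x + \<psi> x) = (\<lambda>x. subset_sum n r \<phi> x + subset_sum n r \<psi> x)"
  unfolding subset_sum_def by (auto simp: sum.distrib)

lemma subset_sum_scale: "subset_sum n r (\<lambda>x. c * \<psi> x) = (\<lambda>x. c * subset_sum n r \<psi> x)"
  unfolding subset_sum_def by (auto simp: sum_distrib_left)

lemma subset_sum_zero: "subset_sum n r (\<lambda>_. 0) = (\<lambda>_. 0)"
  unfolding subset_sum_def by auto

lemma act_subset_sum: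
  assumes g: "g permutes {..<n}"
  shows "act g (subset_sum n r \<psi>) = subset_sum n r (act g \<psi>)"
proof
  fix x
  have ig: "inv g permutes {..<n}" using permutes_inv[OF g] .
  have c1: "inv g ` x \<subseteq> {..<n} \<longleftrightarrow> x \<subseteq> {..<n}" using permutes_in_image[OF ig] by auto
  have c2: "card (inv g ` x) = card x"
    by (rule card_image) (rule inj_on_subset[OF permutes_inj[OF ig]], simp)
  have "(\<Sum>z\<in>Pow x. \<psi> (inv g ` z)) = (\<Sum>z\<in>image (inv g) ` Pow x. \<psi> z)"
    by (rule sum.reindex[symmetric, unfolded comp_def]) (rule inj_on_image_Pow[OF inj_on_subset[OF permutes_inj[OF ig]]], simp)
  also have "image (inv g) ` Pow x = Pow (inv g ` x)" by (rule image_Pow_surj) simp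
  finally show "act g (subset_sum n r \<psi>) x = subset_sum n r (act g \<psi>) x"
    unfolding act_def subset_sum_def using c1 c2 by simp
qed

definition Specht_layer :: "nat \<Rightarrow> nat \<Rightarrow> nat \<Rightarrow> (nat set \<Rightarrow> complex) set" where
  "Specht_layer n r s = subset_sum n r ` Specht n s"

lemma csubspace_Specht_layer: "csubspace (Specht_layer n r s)"
  unfolding csubspace_def Specht_layer_def
proof (intro conjI ballI allI)
  show "(\<lambda>_. 0) \<in> subset_sum n r ` Specht n s"
    using image_eqI[where f="subset_sum n r", OF subset_sum_zero[symmetric] csubspace_zero[OF csubspace_Specht[of n s]]] .
next
  fix \<phi> \<psi> assume "\<phi> \<in> subset_sum n r ` Specht n s" "\<psi> \<in> subset_sum n r ` Specht n s"
  then obtain \<phi>' \<psi>' where "\<phi>' \<in> Specht n s" "\<psi>' \<in> Specht n s" "\<phi> = subset_sum n r \<phi>'" "\<psi> = subset_sum n r \<psi>'" by blast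
  then show "(\<lambda>x. \<phi> x + \<psi> x) \<in> subset_sum n r ` Specht n s"
    by (simp only: subset_sum_add[symmetric]) (rule imageI, rule csubspace_add[OF csubspace_Specht])
next
  fix c \<psi> assume "\<psi> \<in> subset_sum n r ` Specht n s"
  then obtain \<psi>' where "\<psi>' \<in> Specht n s" "\<psi> = subset_sum n r \<psi>'" by blast
  then show "(\<lambda>x. c * \<psi> x) \<in> subset_sum n r ` Specht n s"
    by (simp only: subset_sum_scale[symmetric]) (rule imageI, rule csubspace_scale[OF csubspace_Specht])
qed

lemma Specht_layer_L2: "Specht_layer n r s \<subseteq> L2 n r"
  unfolding Specht_layer_def using subset_sum_L2 by blast

lemma act_Specht_layer: "g permutes {..<n} \<Longrightarrow> \<psi> \<in> Specht_layer n r s \<Longrightarrow> act g \<psi> \<in> Specht_layer n r s"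
proof -
  assume g: "g permutes {..<n}" and p: "\<psi> \<in> Specht_layer n r s"
  then obtain \<phi> where "\<phi> \<in> Specht n s" "\<psi> = subset_sum n r \<phi>" unfolding Specht_layer_def by blast
  then have "act g \<psi> = subset_sum n r (act g \<phi>)" "act g \<phi> \<in> Specht n s" using act_subset_sum[OF g] act_Specht[OF g] by auto
  then show ?thesis unfolding Specht_layer_def by blast
qed

lemma Gsubspace_Specht_layer: "Gsubspace n (Specht_layer n r s)"
  unfolding Gsubspace_def using Specht_layer_L2[of n r s] L2_sub_L2X[of n r] csubspace_Specht_layer[of n r s] act_Specht_layer[of _ n _ r s]
  by (intro conjI allI impI ballI) auto

definition tableau_covariant :: "nat \<Rightarrow> nat \<Rightarrow> (nat \<Rightarrow> nat) \<Rightarrow> (nat \<Rightarrow> nat) \<Rightarrow> (nat set \<Rightarrow> complex) \<Rightarrow> bool" where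
  "tableau_covariant n s a b h \<longleftrightarrow>
     (\<forall>F. F \<subseteq> {..<s} \<longrightarrow> act (column_swap s a b F) h = (\<lambda>x. (-1) ^ card F * h x)) \<and>
     (\<forall>\<pi>. \<pi> permutes {..<n} \<and> (\<forall>i<s. \<pi> (a i) = a i \<and> \<pi> (b i) = b i) \<longrightarrow> act \<pi> h = h)"

lemma tableau_covariant_lin:
  assumes "tableau_covariant n s a b h" "tableau_covariant n s a b k"
  shows "tableau_covariant n s a b (\<lambda>x. c * h x + d * k x)"
  using assms unfolding tableau_covariant_def act_add act_scale by (simp add: algebra_simps)

lemma tableau_covariant_polytabloid:
  "tableau n s a b \<Longrightarrow> tableau_covariant n s a b (polytabloid s a b)"
  unfolding tableau_covariant_def
  by (auto simp: act_column_swap_polytabloid act_polytabloid_fixing)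

lemma tableau_covariant_equivariant:
  assumes T: "tableau n s a b" and h: "tableau_covariant n s a b h"
    and f: "\<And>g \<psi>. g permutes {..<n} \<Longrightarrow> f (act g \<psi>) = act g (f \<psi>)"
    and f_scale: "\<And>c \<psi>. f (\<lambda>x. c * \<psi> x) = (\<lambda>x. c * f \<psi> x)"
  shows "tableau_covariant n s a b (f h)"
  using h unfolding tableau_covariant_def
  by (auto simp: f[symmetric] f_scale column_swap_permutes[OF T])

definition filler :: "nat \<Rightarrow> nat \<Rightarrow> (nat \<Rightarrow> nat) \<Rightarrow> (nat \<Rightarrow> nat) \<Rightarrow> nat \<Rightarrow> nat set" where
  "filler n s a b r = (SOME Y. Y \<subseteq> {..<n} - (a ` {..<s} \<union> b ` {..<s}) \<and> card Y = r - s)"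

definition base_set :: "nat \<Rightarrow> nat \<Rightarrow> (nat \<Rightarrow> nat) \<Rightarrow> (nat \<Rightarrow> nat) \<Rightarrow> nat \<Rightarrow> nat set" where
  "base_set n s a b r = b ` {..<s} \<union> filler n s a b r"

context
  fixes n s r :: nat and a b :: "nat \<Rightarrow> nat"
  assumes T: "tableau n s a b" and sr: "s \<le> r" and rs: "r + s \<le> n"
begin

lemma card_tableau_entries: "card (a ` {..<s} \<union> b ` {..<s}) = 2 * s"
proof -
  have "card (a ` {..<s}) = s" "card (b ` {..<s}) = s"
    using T unfolding tableau_def by (auto simp: card_image)
  moreover have "a ` {..<s} \<inter> b ` {..<s} = {}" using T unfolding tableau_def by auto
  ultimately show ?thesis by (simp add: card_Un_disjoint)
qed

lemma tableau_entries_subset: "a ` {..<s} \<union> b ` {..<s} \<subseteq> {..<n}"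
  using tableau_less[OF T] by auto

lemma card_non_entries: "card ({..<n} - (a ` {..<s} \<union> b ` {..<s})) = n - 2 * s"
  using card_tableau_entries tableau_entries_subset by (simp add: card_Diff_subset)

lemma filler_subset_card: "filler n s a b r \<subseteq> {..<n} - (a ` {..<s} \<union> b ` {..<s})" "card (filler n s a b r) = r - s"
proof -
  have "r - s \<le> card ({..<n} - (a ` {..<s} \<union> b ` {..<s}))" using card_non_entries sr rs by simp
  then obtain Y where "Y \<subseteq> {..<n} - (a ` {..<s} \<union> b ` {..<s})" "card Y = r - s"
    by (meson obtain_subset_with_card_n)
  then have "\<exists>Y. Y \<subseteq> {..<n} - (a ` {..<s} \<union> b ` {..<s}) \<and> card Y = r - s" by blast
  from someI_ex[OF this] show "filler n s a b r \<subseteq> {..<n} - (a ` {..<s} \<union> b ` {..<s})" "card (filler n s a b r) = r - s"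
    unfolding filler_def by auto
qed

lemma base_set_subset: "base_set n s a b r \<subseteq> {..<n}"
  unfolding base_set_def using filler_subset_card tableau_entries_subset by auto

lemma card_base_set: "card (base_set n s a b r) = r"
proof -
  have "card (b ` {..<s}) = s" using T unfolding tableau_def by (auto simp: card_image)
  moreover have "finite (filler n s a b r)" using filler_subset_card(1) finite_subset by blast
  moreover have "b ` {..<s} \<inter> filler n s a b r = {}" using filler_subset_card(1) by auto
  ultimately show ?thesis unfolding base_set_def using filler_subset_card(2) sr by (simp add: card_Un_disjoint)
qed

lemma top_notin_base_set: "i < s \<Longrightarrow> a i \<notin> base_set n s a b r"
  unfolding base_set_def using filler_subset_card(1) tableau_disjoint[OF T] by auto

lemma subset_sum_polytabloid: "subset_sum n r (polytabloid s a b) x = (if x \<subseteq> {..<n} \<and> card x = r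
    then \<Sum>E\<in>Pow {..<s}. (-1) ^ card E * (if swapped_row s a b E \<subseteq> x then 1 else 0) else 0)"
proof (cases "x \<subseteq> {..<n} \<and> card x = r")
  case True
  have "(\<Sum>z\<in>Pow x. polytabloid s a b z) = (\<Sum>E\<in>Pow {..<s}. \<Sum>z\<in>Pow x. (-1) ^ card E * (if z = swapped_row s a b E then 1 else 0))"
    unfolding polytabloid_eq_sum by (rule sum.swap)
  also have "\<dots> = (\<Sum>E\<in>Pow {..<s}. (-1) ^ card E * (if swapped_row s a b E \<subseteq> x then 1 else 0))"
  proof (rule sum.cong[OF refl])
    fix E
    have fx: "finite x" using True finite_subset by blast
    show "(\<Sum>z\<in>Pow x. (-1) ^ card E * (if z = swapped_row s a b E then 1 else 0)) = (-1) ^ card E * (if swapped_row s a b E \<subseteq> x then 1 else (0::complex))"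
      using fx by (simp add: sum_distrib_left[symmetric] sum.delta)
  qed
  finally show ?thesis unfolding subset_sum_def using True by simp
next
  case False
  then have "subset_sum n r (polytabloid s a b) x = 0" unfolding subset_sum_def by auto
  then show ?thesis using False by auto
qed

lemma subset_sum_polytabloid_base_set: "subset_sum n r (polytabloid s a b) (base_set n s a b r) = 1"
proof -
  have "(\<Sum>E\<in>Pow {..<s}. (-1) ^ card E * (if swapped_row s a b E \<subseteq> base_set n s a b r then 1 else (0::complex)))
      = (\<Sum>E\<in>Pow {..<s}. (if E = {} then 1 else 0))"
  proof (rule sum.cong[OF refl])
    fix E assume E: "E \<in> Pow {..<s}"
    show "(-1) ^ card E * (if swapped_row s a b E \<subseteq> base_set n s a b r then 1 else (0::complex)) = (if E = {} then 1 else 0)"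
    proof (cases "E = {}")
      case True
      have "swapped_row s a b {} \<subseteq> base_set n s a b r" unfolding swapped_row_def column_pick_def base_set_def by auto
      then show ?thesis using True by simp
    next
      case False
      then obtain i where i: "i \<in> E" by blast
      then have "a i \<in> swapped_row s a b E" "i < s" using E unfolding swapped_row_def column_pick_def by force+
      then have "\<not> swapped_row s a b E \<subseteq> base_set n s a b r" using top_notin_base_set by blast
      then show ?thesis using False by simp
    qed
  qed
  then show ?thesis unfolding subset_sum_polytabloid using base_set_subset card_base_set by simp
qed

lemma subset_sum_polytabloid_nonzero: "subset_sum n r (polytabloid s a b) \<noteq> (\<lambda>_. 0)"
  using subset_sum_polytabloid_base_set by (metis zero_neq_one)

lemma permutes_fixing_tableau_onto:
  assumes Y: "Y \<subseteq> {..<n} - (a ` {..<s} \<union> b ` {..<s})" "card Y = r - s"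
  obtains \<pi> where "\<pi> permutes {..<n}" "\<forall>i<s. \<pi> (a i) = a i \<and> \<pi> (b i) = b i"
    "\<pi> ` base_set n s a b r = b ` {..<s} \<union> Y"
proof -
  define E where "E = a ` {..<s} \<union> b ` {..<s}"
  define X where "X = filler n s a b r"
  have E: "E \<subseteq> {..<n}" unfolding E_def by (rule tableau_entries_subset)
  have X: "X \<subseteq> {..<n} - E" "card X = r - s" using filler_subset_card unfolding X_def E_def by auto
  have Y': "Y \<subseteq> {..<n} - E" using Y(1) unfolding E_def .
  have "finite X" "finite Y" using finite_subset[OF X(1)] finite_subset[OF Y'] by auto
  then obtain k where k: "bij_betw k X Y" using finite_same_card_bij X(2) Y(2) by metis
  have kY: "k z \<in> Y" if "z \<in> X" for z using bij_betw_apply[OF k that] .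
  define k' where "k' z = (if z \<in> X then k z else z)" for z
  have "inj_on k' (E \<union> X)"
    unfolding k'_def using bij_betw_imp_inj_on[OF k] kY Y' by (intro inj_on_extend_id) auto
  moreover have "E \<union> X \<subseteq> {..<n}" using E X(1) by blast
  moreover have "k' ` (E \<union> X) \<subseteq> {..<n}" using E kY Y' unfolding k'_def by auto
  ultimately obtain \<pi> where \<pi>: "\<pi> permutes {..<n}" "\<forall>z\<in>E \<union> X. \<pi> z = k' z"
    using permutes_extend[of "{..<n}" "E \<union> X" k'] by auto
  have fixE: "\<pi> z = z" if "z \<in> E" for z using \<pi>(2) that X(1) unfolding k'_def by auto
  then have fix_entries: "\<forall>i<s. \<pi> (a i) = a i \<and> \<pi> (b i) = b i" unfolding E_def by simp
  have "\<pi> ` (b ` {..<s}) = b ` {..<s}" using fixE unfolding E_def by (simp add: image_image)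
  moreover have "\<pi> ` X = k ` X" using \<pi>(2) unfolding k'_def by (intro image_cong) auto
  then have "\<pi> ` X = Y" using bij_betw_imp_surj_on[OF k] by simp
  ultimately have "\<pi> ` base_set n s a b r = b ` {..<s} \<union> Y" unfolding base_set_def X_def by (simp add: image_Un)
  then show ?thesis using that \<pi>(1) fix_entries by blast
qed

lemma unbalanced_layer_element_orbit:
  assumes x: "x \<in> layer n r" and unbalanced: "\<And>i. i < s \<Longrightarrow> (a i \<in> x) \<noteq> (b i \<in> x)"
  obtains F \<pi> where "F \<subseteq> {..<s}" "\<pi> permutes {..<n}" "\<forall>i<s. \<pi> (a i) = a i \<and> \<pi> (b i) = b i"
    "column_swap s a b F ` x = \<pi> ` base_set n s a b r"
proof -
  define F where "F = {i. i < s \<and> a i \<in> x}"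
  define Y where "Y = x - (a ` {..<s} \<union> b ` {..<s})"
  have F: "F \<subseteq> {..<s}" unfolding F_def by auto
  have img: "column_swap s a b F ` x = b ` {..<s} \<union> Y"
    unfolding F_def Y_def using unbalanced by (rule column_swap_normal_form[OF T x])
  have "card (column_swap s a b F ` x) = r"
    using x image_permutes_layer[OF column_swap_permutes[OF T F]] unfolding layer_def by blast
  moreover have "card (b ` {..<s}) = s" using T unfolding tableau_def by (auto simp: card_image)
  moreover have "finite Y" "b ` {..<s} \<inter> Y = {}" unfolding Y_def using x unfolding layer_def
    by (auto intro: finite_subset)
  ultimately have "card Y = r - s" unfolding img by (simp add: card_Un_disjoint)
  moreover have "Y \<subseteq> {..<n} - (a ` {..<s} \<union> b ` {..<s})" using x unfolding Y_def layer_def by auto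
  ultimately obtain \<pi> where "\<pi> permutes {..<n}" "\<forall>i<s. \<pi> (a i) = a i \<and> \<pi> (b i) = b i"
    "\<pi> ` base_set n s a b r = b ` {..<s} \<union> Y"
    using permutes_fixing_tableau_onto by blast
  then show ?thesis using that F img by simp
qed

(* A layer element with a balanced column is fixed by the swap of that column, which changes
   the sign; every other one is carried to base_set by the tableau's symmetries. *)
lemma tableau_covariant_eq_0:
  assumes hL: "h \<in> L2 n r" and h: "tableau_covariant n s a b h" and h0: "h (base_set n s a b r) = 0"
  shows "h = (\<lambda>_. 0)"
proof
  have hT: "\<And>F. F \<subseteq> {..<s} \<Longrightarrow> act (column_swap s a b F) h = (\<lambda>x. (-1) ^ card F * h x)"
    and hP: "\<And>\<pi>. \<pi> permutes {..<n} \<Longrightarrow> \<forall>i<s. \<pi> (a i) = a i \<and> \<pi> (b i) = b i \<Longrightarrow> act \<pi> h = h"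
    using h unfolding tableau_covariant_def by auto
  fix x
  show "h x = 0"
  proof (cases "x \<in> layer n r")
    case False
    then show ?thesis by (rule L2_outside_layer[OF hL])
  next
    case x: True
    show ?thesis
    proof (cases "\<exists>i<s. (a i \<in> x \<longleftrightarrow> b i \<in> x)")
      case True
      then obtain i where i: "i < s" "a i \<in> x \<longleftrightarrow> b i \<in> x" by blast
      have si: "{i} \<subseteq> {..<s}" using i by auto
      have "act (column_swap s a b {i}) h x = h x"
        unfolding act_def inv_column_swap[OF T si] column_swap_single_image[OF T i] ..
      then have "h x = - h x" using fun_cong[OF hT[OF si], of x] by simp
      then show ?thesis by simp
    next
      case False
      then have "\<And>i. i < s \<Longrightarrow> (a i \<in> x) \<noteq> (b i \<in> x)" by blast
      then obtain F \<pi> where F: "F \<subseteq> {..<s}" and \<pi>: "\<pi> permutes {..<n}" "\<forall>i<s. \<pi> (a i) = a i \<and> \<pi> (b i) = b i"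
        and img: "column_swap s a b F ` x = \<pi> ` base_set n s a b r"
        by (rule unbalanced_layer_element_orbit[OF x])
      have "act (column_swap s a b F) h x = h (\<pi> ` base_set n s a b r)"
        unfolding act_def inv_column_swap[OF T F] img ..
      also have "\<dots> = act \<pi> h (\<pi> ` base_set n s a b r)" by (simp only: hP[OF \<pi>])
      also have "\<dots> = 0" unfolding act_def by (simp add: image_image permutes_inverses(2)[OF \<pi>(1)] h0)
      finally show ?thesis using fun_cong[OF hT[OF F], of x] by simp
    qed
  qed
qed

lemma tableau_covariant_eq_multiple:
  assumes hL: "h \<in> L2 n r" and h: "tableau_covariant n s a b h"
  shows "h = (\<lambda>x. h (base_set n s a b r) * subset_sum n r (polytabloid s a b) x)"
proof -
  define u where "u = subset_sum n r (polytabloid s a b)"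
  define c where "c = h (base_set n s a b r)"
  have "tableau_covariant n s a b u"
    unfolding u_def
    by (rule tableau_covariant_equivariant[OF T tableau_covariant_polytabloid[OF T]])
       (simp_all add: act_subset_sum subset_sum_scale)
  then have "tableau_covariant n s a b (\<lambda>x. 1 * h x + (- c) * u x)"
    by (rule tableau_covariant_lin[OF h])
  moreover have "(\<lambda>x. 1 * h x + (- c) * u x) \<in> L2 n r"
    using hL subset_sum_L2 unfolding u_def by (intro csubspace_lin[OF csubspace_L2])
  ultimately have zero: "(\<lambda>x. 1 * h x + (- c) * u x) = (\<lambda>_. 0)"
    by (intro tableau_covariant_eq_0) (simp_all add: u_def c_def subset_sum_polytabloid_base_set)
  have "h x - c * u x = 0" for x using fun_cong[OF zero, of x] by simp
  then show ?thesis unfolding u_def[symmetric] c_def[symmetric] by (simp add: fun_eq_iff)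
qed

end

section \<open>Identification of the components L2comp\<close>

lemma GirreducibleD: "Girreducible n V \<Longrightarrow> Gsubspace n W \<Longrightarrow> W \<subseteq> V \<Longrightarrow> W = {\<lambda>_. 0} \<or> W = V"
  unfolding Girreducible_def by blast

lemma Gsubspace_zero: "Gsubspace n {\<lambda>_. 0}"
  unfolding Gsubspace_def csubspace_def L2X_def by (simp add: act_zero)

lemma Gsubspace_preimage_subset_sum:
  assumes "Gsubspace n W"
  shows "Gsubspace n {\<psi> \<in> Specht n s. subset_sum n r \<psi> \<in> W}"
proof -
  have cW: "csubspace W" and iW: "\<And>g \<psi>. g permutes {..<n} \<Longrightarrow> \<psi> \<in> W \<Longrightarrow> act g \<psi> \<in> W"
    using assms unfolding Gsubspace_def by auto
  have "csubspace {\<psi> \<in> Specht n s. subset_sum n r \<psi> \<in> W}"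
    using csubspace_Specht[of n s] cW unfolding csubspace_def
    by (auto simp: subset_sum_zero subset_sum_add subset_sum_scale)
  moreover have "act g \<psi> \<in> {\<psi> \<in> Specht n s. subset_sum n r \<psi> \<in> W}"
    if "g permutes {..<n}" "\<psi> \<in> {\<psi> \<in> Specht n s. subset_sum n r \<psi> \<in> W}" for g \<psi>
    using that act_Specht act_subset_sum[of g n r \<psi>, symmetric] iW by auto
  ultimately show ?thesis unfolding Gsubspace_def using Specht_L2X by blast
qed

lemma GisoE:
  assumes "Giso n V W"
  obtains f where "bij_betw f V W" "\<And>c \<psi>. \<psi> \<in> V \<Longrightarrow> f (\<lambda>x. c * \<psi> x) = (\<lambda>x. c * f \<psi> x)"
    "\<And>g \<psi>. g permutes {..<n} \<Longrightarrow> \<psi> \<in> V \<Longrightarrow> f (act g \<psi>) = act g (f \<psi>)"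
proof -
  obtain f where "bij_betw f V W
     \<and> (\<forall>\<phi>\<in>V. \<forall>\<psi>\<in>V. f (\<lambda>x. \<phi> x + \<psi> x) = (\<lambda>x. f \<phi> x + f \<psi> x))
     \<and> (\<forall>c. \<forall>\<psi>\<in>V. f (\<lambda>x. c * \<psi> x) = (\<lambda>x. c * f \<psi> x))
     \<and> (\<forall>g. g permutes {..<n} \<longrightarrow> (\<forall>\<psi>\<in>V. f (act g \<psi>) = act g (f \<psi>)))"
    using assms unfolding Giso_def by (rule exE)
  then show ?thesis using that by blast
qed

lemma tableau_covariant_preimage:
  assumes T: "tableau n s a b" and V: "Gsubspace n V" and inj: "inj_on f V"
    and f_scale: "\<And>c \<psi>. \<psi> \<in> V \<Longrightarrow> f (\<lambda>x. c * \<psi> x) = (\<lambda>x. c * f \<psi> x)"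
    and f_act: "\<And>g \<psi>. g permutes {..<n} \<Longrightarrow> \<psi> \<in> V \<Longrightarrow> f (act g \<psi>) = act g (f \<psi>)"
    and w: "w \<in> V" and cov: "tableau_covariant n s a b (f w)"
  shows "tableau_covariant n s a b w"
proof -
  have cV: "csubspace V" and iV: "\<And>g \<psi>. g permutes {..<n} \<Longrightarrow> \<psi> \<in> V \<Longrightarrow> act g \<psi> \<in> V"
    using V unfolding Gsubspace_def by auto
  show ?thesis unfolding tableau_covariant_def
  proof (intro conjI allI impI)
    fix F assume F: "F \<subseteq> {..<s}"
    have p: "column_swap s a b F permutes {..<n}" by (rule column_swap_permutes[OF T F])
    have "f (act (column_swap s a b F) w) = f (\<lambda>x. (-1) ^ card F * w x)"
      using cov F unfolding tableau_covariant_def f_act[OF p w] f_scale[OF w] by simp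
    then show "act (column_swap s a b F) w = (\<lambda>x. (-1) ^ card F * w x)"
      using inj iV[OF p w] csubspace_scale[OF cV w] unfolding inj_on_def by blast
  next
    fix \<pi> assume p: "\<pi> permutes {..<n} \<and> (\<forall>i<s. \<pi> (a i) = a i \<and> \<pi> (b i) = b i)"
    have "f (act \<pi> w) = f w" using cov p unfolding tableau_covariant_def f_act[OF conjunct1[OF p] w] by blast
    then show "act \<pi> w = w" using inj iV[OF conjunct1[OF p] w] w unfolding inj_on_def by blast
  qed
qed

context
  fixes n s r :: nat
  assumes sr: "s \<le> r" and rs: "r + s \<le> n"
begin

lemma subset_sum_std_nonzero: "subset_sum n r (std_polytabloid s) \<noteq> (\<lambda>_. 0)"
  using subset_sum_polytabloid_nonzero[OF tableau_std sr rs] sr rs by simp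

lemma inj_on_subset_sum_Specht: "inj_on (subset_sum n r) (Specht n s)"
proof -
  define K where "K = {\<psi> \<in> Specht n s. subset_sum n r \<psi> \<in> {\<lambda>_. 0}}"
  have "K = {\<lambda>_. 0} \<or> K = Specht n s"
    using GirreducibleD[OF Girreducible_Specht Gsubspace_preimage_subset_sum[OF Gsubspace_zero]]
      sr rs unfolding K_def by auto
  moreover have "std_polytabloid s \<in> Specht n s - K"
    using polytabloid_Specht[OF tableau_std] subset_sum_std_nonzero sr rs unfolding K_def by auto
  ultimately have K: "K = {\<lambda>_. 0}" by blast
  show ?thesis
  proof (rule inj_onI)
    fix \<phi> \<psi> assume A: "\<phi> \<in> Specht n s" "\<psi> \<in> Specht n s" "subset_sum n r \<phi> = subset_sum n r \<psi>"
    have "(\<lambda>x. 1 * \<phi> x + (-1) * \<psi> x) \<in> Specht n s" using csubspace_lin[OF csubspace_Specht A(1,2)] .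
    moreover have "subset_sum n r (\<lambda>x. 1 * \<phi> x + (-1) * \<psi> x) = (\<lambda>_. 0)"
      unfolding subset_sum_add subset_sum_scale A(3) by simp
    ultimately have "(\<lambda>x. 1 * \<phi> x + (-1) * \<psi> x) = (\<lambda>_. 0)" using K unfolding K_def by blast
    then show "\<phi> = \<psi>" by (simp add: fun_eq_iff)
  qed
qed

lemma Specht_layer_nonzero: "Specht_layer n r s \<noteq> {\<lambda>_. 0}"
proof -
  have "std_polytabloid s \<in> Specht n s"
    using polytabloid_Specht[OF tableau_std] sr rs by simp
  then have "subset_sum n r (std_polytabloid s) \<in> Specht_layer n r s"
    unfolding Specht_layer_def by (rule imageI)
  then show ?thesis using subset_sum_std_nonzero by auto
qed

theorem Girreducible_Specht_layer: "Girreducible n (Specht_layer n r s)"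
  unfolding Girreducible_def
proof (intro conjI allI impI)
  show "Gsubspace n (Specht_layer n r s)" by (rule Gsubspace_Specht_layer)
  show "Specht_layer n r s \<noteq> {\<lambda>_. 0}" by (rule Specht_layer_nonzero)
next
  fix W assume W: "Gsubspace n W \<and> W \<subseteq> Specht_layer n r s"
  define W' where "W' = {\<psi> \<in> Specht n s. subset_sum n r \<psi> \<in> W}"
  have "W' = {\<lambda>_. 0} \<or> W' = Specht n s"
    using GirreducibleD[OF Girreducible_Specht Gsubspace_preimage_subset_sum] W sr rs
    unfolding W'_def by auto
  moreover have "W = subset_sum n r ` W'" using W unfolding W'_def Specht_layer_def by blast
  ultimately show "W = {\<lambda>_. 0} \<or> W = Specht_layer n r s"
    unfolding Specht_layer_def by (auto simp: subset_sum_zero)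
qed

theorem Giso_Specht_layer: "Giso n (Specht_layer n r s) (Specht n s)"
proof -
  define f where "f = the_inv_into (Specht n s) (subset_sum n r)"
  have bU: "bij_betw (subset_sum n r) (Specht n s) (Specht_layer n r s)"
    unfolding Specht_layer_def using inj_on_subset_sum_Specht by (simp add: bij_betw_def)
  have fU: "\<And>\<psi>. \<psi> \<in> Specht n s \<Longrightarrow> f (subset_sum n r \<psi>) = \<psi>"
    unfolding f_def using the_inv_into_f_f[OF inj_on_subset_sum_Specht] by blast
  show ?thesis unfolding Giso_def
  proof (intro exI[of _ f] conjI allI impI ballI)
    show "bij_betw f (Specht_layer n r s) (Specht n s)" unfolding f_def by (rule bij_betw_the_inv_into[OF bU])
  next
    fix \<phi> \<psi> assume A: "\<phi> \<in> Specht_layer n r s" "\<psi> \<in> Specht_layer n r s"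
    then obtain \<phi>' \<psi>' where B: "\<phi>' \<in> Specht n s" "\<psi>' \<in> Specht n s" "\<phi> = subset_sum n r \<phi>'" "\<psi> = subset_sum n r \<psi>'"
      unfolding Specht_layer_def by blast
    have "(\<lambda>x. \<phi> x + \<psi> x) = subset_sum n r (\<lambda>x. \<phi>' x + \<psi>' x)" unfolding B subset_sum_add ..
    then show "f (\<lambda>x. \<phi> x + \<psi> x) = (\<lambda>x. f \<phi> x + f \<psi> x)"
      using fU B csubspace_add[OF csubspace_Specht B(1,2)] by simp
  next
    fix c \<psi> assume A: "\<psi> \<in> Specht_layer n r s"
    then obtain \<psi>' where B: "\<psi>' \<in> Specht n s" "\<psi> = subset_sum n r \<psi>'" unfolding Specht_layer_def by blast
    have "(\<lambda>x. c * \<psi> x) = subset_sum n r (\<lambda>x. c * \<psi>' x)" unfolding B subset_sum_scale ..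
    then show "f (\<lambda>x. c * \<psi> x) = (\<lambda>x. c * f \<psi> x)"
      using fU B csubspace_scale[OF csubspace_Specht B(1)] by simp
  next
    fix g \<psi> assume g: "g permutes {..<n}" and A: "\<psi> \<in> Specht_layer n r s"
    then obtain \<psi>' where B: "\<psi>' \<in> Specht n s" "\<psi> = subset_sum n r \<psi>'" unfolding Specht_layer_def by blast
    then show "f (act g \<psi>) = act g (f \<psi>)"
      using fU act_subset_sum[OF g] act_Specht[OF g] by simp
  qed
qed

lemma Specht_layer_unique:
  assumes V: "Girreducible n V" "V \<subseteq> L2 n r" "Giso n V (Specht n s)"
  shows "V = Specht_layer n r s"
proof -
  obtain f where f: "bij_betw f V (Specht n s)"
    "\<And>c \<psi>. \<psi> \<in> V \<Longrightarrow> f (\<lambda>x. c * \<psi> x) = (\<lambda>x. c * f \<psi> x)"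
    "\<And>g \<psi>. g permutes {..<n} \<Longrightarrow> \<psi> \<in> V \<Longrightarrow> f (act g \<psi>) = act g (f \<psi>)"
    using GisoE[OF V(3)] by blast
  have GV: "Gsubspace n V" using V(1) unfolding Girreducible_def by blast
  have T: "tableau n s (std_top s) (std_bot s)" using tableau_std sr rs by simp
  define e where "e = std_polytabloid s"
  have eS: "e \<in> Specht n s" unfolding e_def by (rule polytabloid_Specht[OF T])
  define w where "w = inv_into V f e"
  have wV: "w \<in> V" unfolding w_def using f(1) eS by (metis bij_betw_def inv_into_into)
  have fw: "f w = e" unfolding w_def using f(1) eS by (simp add: bij_betw_def f_inv_into_f)
  have finj: "inj_on f V" using f(1) by (simp add: bij_betw_def)
  have "tableau_covariant n s (std_top s) (std_bot s) (f w)"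
    unfolding fw e_def by (rule tableau_covariant_polytabloid[OF T])
  then have cov: "tableau_covariant n s (std_top s) (std_bot s) w"
    using tableau_covariant_preimage[OF T GV finj f(2) f(3) wV] by simp
  have "w = (\<lambda>x. w (base_set n s (std_top s) (std_bot s) r) * subset_sum n r e x)"
    unfolding e_def using wV V(2) by (intro tableau_covariant_eq_multiple[OF T sr rs _ cov]) blast
  also have "\<dots> = subset_sum n r (\<lambda>x. w (base_set n s (std_top s) (std_bot s) r) * e x)"
    by (simp add: subset_sum_scale)
  finally have "w \<in> Specht_layer n r s"
    unfolding Specht_layer_def using csubspace_scale[OF csubspace_Specht eS] by blast
  moreover have "w \<noteq> (\<lambda>_. 0)"
  proof
    assume "w = (\<lambda>_. 0)"
    then have "(\<lambda>x. 0 * w x) = w" by simp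
    then have "f w = (\<lambda>x. 0 * f w x)" using f(2)[OF wV, of 0] by metis
    then have "e = (\<lambda>_. 0)" using fw by simp
    then show False using polytabloid_nonzero[OF T] unfolding e_def by blast
  qed
  ultimately have "V \<inter> Specht_layer n r s \<noteq> {\<lambda>_. 0}" using wV by blast
  then have "V \<subseteq> Specht_layer n r s"
    using GirreducibleD[OF V(1) Gsubspace_inter[OF GV Gsubspace_Specht_layer]] by blast
  then have "V = {\<lambda>_. 0} \<or> V = Specht_layer n r s" by (rule GirreducibleD[OF Girreducible_Specht_layer GV])
  moreover have "V \<noteq> {\<lambda>_. 0}" using V(1) unfolding Girreducible_def by blast
  ultimately show ?thesis by blast
qed

theorem L2comp_eq_Specht_layer: "L2comp n r s = Specht_layer n r s"
  unfolding L2comp_def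
proof (rule the_equality)
  show "Girreducible n (Specht_layer n r s) \<and> Specht_layer n r s \<subseteq> L2 n r \<and> Giso n (Specht_layer n r s) (Specht n s)"
    using Girreducible_Specht_layer Specht_layer_L2 Giso_Specht_layer by blast
next
  fix V assume "Girreducible n V \<and> V \<subseteq> L2 n r \<and> Giso n V (Specht n s)"
  then show "V = Specht_layer n r s" using Specht_layer_unique by blast
qed

end

section \<open>Counting tableaux\<close>

definition tableaux_on :: "nat \<Rightarrow> nat set \<Rightarrow> ((nat \<Rightarrow> nat) \<times> (nat \<Rightarrow> nat)) set" where
  "tableaux_on s A = {(a, b). a \<in> {..<s} \<rightarrow>\<^sub>E A \<and> b \<in> {..<s} \<rightarrow>\<^sub>E A \<and> inj_on a {..<s} \<and> inj_on b {..<s}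
     \<and> a ` {..<s} \<inter> b ` {..<s} = {}}"

lemma finite_tableaux_on: "finite A \<Longrightarrow> finite (tableaux_on s A)"
proof -
  assume "finite A"
  then have "finite (({..<s} \<rightarrow>\<^sub>E A) \<times> ({..<s} \<rightarrow>\<^sub>E A))" by (auto intro!: finite_PiE)
  moreover have "tableaux_on s A \<subseteq> ({..<s} \<rightarrow>\<^sub>E A) \<times> ({..<s} \<rightarrow>\<^sub>E A)" unfolding tableaux_on_def by auto
  ultimately show ?thesis by (rule finite_subset[rotated])
qed

lemma tableaux_on_0: "tableaux_on 0 A = {(\<lambda>_. undefined, \<lambda>_. undefined)}"
  unfolding tableaux_on_def by auto

lemma restrict_fun_upd_PiE:
  assumes "a \<in> {..<Suc s} \<rightarrow>\<^sub>E A"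
  shows "(restrict a {..<s})(s := a s) = a"
proof
  fix x show "((restrict a {..<s})(s := a s)) x = a x"
    using PiE_arb[OF assms, of x] by (cases "x < s"; cases "x = s") auto
qed

lemma restrict_fun_upd:
  fixes s :: nat
  assumes "a \<in> {..<s} \<rightarrow>\<^sub>E A"
  shows "restrict (a(s := y)) {..<s} = a"
proof
  fix x show "restrict (a(s := y)) {..<s} x = a x"
    using PiE_arb[OF assms, of x] by (cases "x < s") auto
qed

lemma tableaux_on_Suc_restrict:
  assumes "(a, b) \<in> tableaux_on (Suc s) A"
  shows "a s \<in> A" "b s \<in> A - {a s}"
    "(restrict a {..<s}, restrict b {..<s}) \<in> tableaux_on s (A - {a s, b s})"
proof -
  have aP: "a \<in> {..<Suc s} \<rightarrow>\<^sub>E A" "b \<in> {..<Suc s} \<rightarrow>\<^sub>E A"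
    and inj: "inj_on a {..<Suc s}" "inj_on b {..<Suc s}" and dj: "a ` {..<Suc s} \<inter> b ` {..<Suc s} = {}"
    using assms unfolding tableaux_on_def by auto
  have "a s \<in> a ` {..<Suc s}" "b s \<in> b ` {..<Suc s}" by auto
  then show "a s \<in> A" "b s \<in> A - {a s}"
    using PiE_mem[OF aP(1), of s] PiE_mem[OF aP(2), of s] dj by blast+
  have mem: "a k \<in> A - {a s, b s}" "b k \<in> A - {a s, b s}" if k: "k < s" for k
  proof -
    have "a k \<in> a ` {..<Suc s}" "b s \<in> b ` {..<Suc s}" "b k \<in> b ` {..<Suc s}" "a s \<in> a ` {..<Suc s}"
      using k by auto
    then have "a k \<noteq> b s" "b k \<noteq> a s" using dj by blast+
    moreover have "a k \<noteq> a s" "b k \<noteq> b s" using inj_onD[OF inj(1), of k s] inj_onD[OF inj(2), of k s] k by auto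
    moreover have "a k \<in> A" "b k \<in> A" using PiE_mem[OF aP(1), of k] PiE_mem[OF aP(2), of k] k by auto
    ultimately show "a k \<in> A - {a s, b s}" "b k \<in> A - {a s, b s}" by auto
  qed
  have "restrict a {..<s} \<in> {..<s} \<rightarrow>\<^sub>E A - {a s, b s}" "restrict b {..<s} \<in> {..<s} \<rightarrow>\<^sub>E A - {a s, b s}"
    using mem by (auto simp: restrict_PiE_iff)
  moreover have "inj_on (restrict a {..<s}) {..<s}" "inj_on (restrict b {..<s}) {..<s}"
    using inj_on_subset[OF inj(1), of "{..<s}"] inj_on_subset[OF inj(2), of "{..<s}"]
    by (auto simp: inj_on_def)
  moreover have "restrict a {..<s} ` {..<s} \<subseteq> a ` {..<Suc s}" "restrict b {..<s} ` {..<s} \<subseteq> b ` {..<Suc s}"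
    by auto
  then have "restrict a {..<s} ` {..<s} \<inter> restrict b {..<s} ` {..<s} = {}" using dj by blast
  ultimately show "(restrict a {..<s}, restrict b {..<s}) \<in> tableaux_on s (A - {a s, b s})"
    unfolding tableaux_on_def by blast
qed

lemma tableaux_on_Suc_extend:
  assumes yz: "y \<in> A" "z \<in> A - {y}" and ab: "(a, b) \<in> tableaux_on s (A - {y, z})"
  shows "(a(s := y), b(s := z)) \<in> tableaux_on (Suc s) A"
proof -
  have aP: "a \<in> {..<s} \<rightarrow>\<^sub>E A - {y, z}" "b \<in> {..<s} \<rightarrow>\<^sub>E A - {y, z}"
    and inj: "inj_on a {..<s}" "inj_on b {..<s}" and dj: "a ` {..<s} \<inter> b ` {..<s} = {}"
    using ab unfolding tableaux_on_def by auto
  have img: "(a(s := y)) ` {..<Suc s} = insert y (a ` {..<s})" "(b(s := z)) ` {..<Suc s} = insert z (b ` {..<s})"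
    unfolding lessThan_Suc by auto
  have "a(s := y) \<in> {..<Suc s} \<rightarrow>\<^sub>E A" "b(s := z) \<in> {..<Suc s} \<rightarrow>\<^sub>E A"
    using aP yz by (auto simp: PiE_iff extensional_def less_Suc_eq)
  moreover have "inj_on (a(s := y)) {..<Suc s}" "inj_on (b(s := z)) {..<Suc s}"
    using inj aP unfolding lessThan_Suc by (auto simp: inj_on_def PiE_iff)
  moreover have "(a(s := y)) ` {..<Suc s} \<inter> (b(s := z)) ` {..<Suc s} = {}"
    unfolding img using dj yz aP by (auto simp: PiE_iff)
  ultimately show ?thesis unfolding tableaux_on_def by auto
qed

definition indic :: "nat set \<Rightarrow> nat \<Rightarrow> complex" where
  "indic X y = (if y \<in> X then 1 else 0)"

(* Each column {y, z} of a tableau contributes this factor to u'_T(x2) * u_T(x1). *)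
definition pair_weight :: "nat set \<Rightarrow> nat set \<Rightarrow> nat \<Rightarrow> nat \<Rightarrow> complex" where
  "pair_weight x1 x2 y z = (indic x2 z - indic x2 y) * (indic x1 z - indic x1 y)"

definition tableau_weight :: "nat set \<Rightarrow> nat set \<Rightarrow> nat \<Rightarrow> nat set \<Rightarrow> complex" where
  "tableau_weight x1 x2 s A = (\<Sum>(a, b)\<in>tableaux_on s A. \<Prod>i<s. pair_weight x1 x2 (a i) (b i))"

lemma tableau_weight_0: "tableau_weight x1 x2 0 A = 1"
  unfolding tableau_weight_def tableaux_on_0 by simp

lemma tableau_weight_Suc:
  assumes A: "finite A"
  shows "tableau_weight x1 x2 (Suc s) A
    = (\<Sum>y\<in>A. \<Sum>z\<in>A - {y}. pair_weight x1 x2 y z * tableau_weight x1 x2 s (A - {y, z}))"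
proof -
  define Sig where "Sig = Sigma (Sigma A (\<lambda>y. A - {y})) (\<lambda>p. tableaux_on s (A - {fst p, snd p}))"
  define H where "H = (\<lambda>((y, z), (a, b)). pair_weight x1 x2 y z * (\<Prod>i<s. pair_weight x1 x2 (a i) (b i)))"
  \<comment> \<open>Split off the last column of the tableau.\<close>
  have "tableau_weight x1 x2 (Suc s) A = sum H Sig"
    unfolding tableau_weight_def
  proof (rule sum.reindex_bij_witness[where i="\<lambda>((y, z), (a, b)). (a(s := y), b(s := z))"
        and j="\<lambda>(a, b). ((a s, b s), (restrict a {..<s}, restrict b {..<s}))"])
    fix p assume p: "p \<in> tableaux_on (Suc s) A"
    obtain a b where ab: "p = (a, b)" by (cases p)
    have "a \<in> {..<Suc s} \<rightarrow>\<^sub>E A" "b \<in> {..<Suc s} \<rightarrow>\<^sub>E A" using p unfolding ab tableaux_on_def by auto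
    then show "(\<lambda>((y, z), (a, b)). (a(s := y), b(s := z))) ((\<lambda>(a, b). ((a s, b s), (restrict a {..<s}, restrict b {..<s}))) p) = p"
      unfolding ab by (simp only: prod.case restrict_fun_upd_PiE)
    show "(\<lambda>(a, b). ((a s, b s), (restrict a {..<s}, restrict b {..<s}))) p \<in> Sig"
      unfolding ab Sig_def using tableaux_on_Suc_restrict[OF p[unfolded ab]] by auto
    show "H ((\<lambda>(a, b). ((a s, b s), (restrict a {..<s}, restrict b {..<s}))) p) = (case p of (a, b) \<Rightarrow> \<Prod>i<Suc s. pair_weight x1 x2 (a i) (b i))"
      unfolding ab H_def by (simp add: prod.lessThan_Suc mult.commute)
  next
    fix q assume q: "q \<in> Sig"
    obtain y z a b where yz: "q = ((y, z), (a, b))" by (metis prod.collapse)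
    have q': "y \<in> A" "z \<in> A - {y}" "(a, b) \<in> tableaux_on s (A - {y, z})" using q unfolding yz Sig_def by auto
    then have "a \<in> {..<s} \<rightarrow>\<^sub>E A - {y, z}" "b \<in> {..<s} \<rightarrow>\<^sub>E A - {y, z}" unfolding tableaux_on_def by auto
    then show "(\<lambda>(a, b). ((a s, b s), (restrict a {..<s}, restrict b {..<s}))) ((\<lambda>((y, z), (a, b)). (a(s := y), b(s := z))) q) = q"
      unfolding yz by (simp add: restrict_fun_upd)
    show "(\<lambda>((y, z), (a, b)). (a(s := y), b(s := z))) q \<in> tableaux_on (Suc s) A"
      unfolding yz using tableaux_on_Suc_extend[OF q'] by simp
  qed
  also have "sum H Sig = (\<Sum>p\<in>Sigma A (\<lambda>y. A - {y}). \<Sum>q\<in>tableaux_on s (A - {fst p, snd p}). H (p, q))"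
    unfolding Sig_def
    by (rule sum.Sigma[symmetric, where g="\<lambda>p q. H (p, q)", unfolded case_prod_beta prod.collapse])
       (use A in \<open>auto intro: finite_tableaux_on\<close>)
  also have "\<dots> = (\<Sum>y\<in>A. \<Sum>z\<in>A - {y}. \<Sum>q\<in>tableaux_on s (A - {y, z}). H ((y, z), q))"
    using sum.Sigma[of A "\<lambda>y. A - {y}" "\<lambda>y z. \<Sum>q\<in>tableaux_on s (A - {y, z}). H ((y, z), q)"] A
    by (simp add: case_prod_beta)
  finally show ?thesis
    unfolding tableau_weight_def H_def by (simp add: sum_distrib_left case_prod_beta)
qed

lemma sum_pairs_indicator:
  fixes G :: "nat \<Rightarrow> nat \<Rightarrow> complex"
  assumes A: "finite A" and UW: "U \<inter> W = {}" and G: "\<And>y z. y \<in> A \<inter> U \<Longrightarrow> z \<in> A \<inter> W \<Longrightarrow> G y z = c"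
  shows "(\<Sum>y\<in>A. \<Sum>z\<in>A - {y}. (if y \<in> U \<and> z \<in> W then G y z else 0)) = of_nat (card (A \<inter> U)) * of_nat (card (A \<inter> W)) * c"
proof -
  have "(\<Sum>z\<in>A - {y}. (if y \<in> U \<and> z \<in> W then G y z else 0)) = (if y \<in> U then of_nat (card (A \<inter> W)) * c else 0)"
    if y: "y \<in> A" for y
  proof (cases "y \<in> U")
    case True
    have "(\<Sum>z\<in>A - {y}. (if y \<in> U \<and> z \<in> W then G y z else 0)) = (\<Sum>z\<in>A - {y}. (if z \<in> W then c else 0))"
      using True y G by (intro sum.cong) auto
    also have "\<dots> = (\<Sum>z\<in>(A - {y}) \<inter> W. c)" by (rule sum.inter_restrict[symmetric]) (use A in simp)
    also have "(A - {y}) \<inter> W = A \<inter> W" using True UW by auto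
    finally show ?thesis using True by simp
  qed simp
  then have "(\<Sum>y\<in>A. \<Sum>z\<in>A - {y}. (if y \<in> U \<and> z \<in> W then G y z else 0))
      = (\<Sum>y\<in>A. (if y \<in> U then of_nat (card (A \<inter> W)) * c else 0))" by (intro sum.cong) auto
  also have "\<dots> = (\<Sum>y\<in>A \<inter> U. of_nat (card (A \<inter> W)) * c)" by (rule sum.inter_restrict[symmetric]) (use A in simp)
  finally show ?thesis by simp
qed

lemma card_Diff_pair_Int:
  assumes "finite A" "y \<in> A" "z \<in> A" "y \<noteq> z"
  shows "card ((A - {y, z}) \<inter> X) = card (A \<inter> X) - (if y \<in> X then 1 else 0) - (if z \<in> X then 1 else 0)"
proof -
  have "(A - {y, z}) \<inter> X = ((A \<inter> X) - {y}) - {z}" by auto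
  then show ?thesis using assms by (simp add: card_Diff_singleton_if)
qed

lemma card_Diff_pair: "finite A \<Longrightarrow> y \<in> A \<Longrightarrow> z \<in> A \<Longrightarrow> y \<noteq> z \<Longrightarrow> card (A - {y, z}) = card A - 2"
  using card_Diff_pair_Int[of A y z UNIV] by simp

lemma card_Int_split: "finite A \<Longrightarrow> card (A \<inter> X) = card (A \<inter> (X \<inter> Y)) + card (A \<inter> (X - Y))"
proof -
  assume A: "finite A"
  have "A \<inter> X = (A \<inter> (X \<inter> Y)) \<union> (A \<inter> (X - Y))" by auto
  moreover have "(A \<inter> (X \<inter> Y)) \<inter> (A \<inter> (X - Y)) = {}" by auto
  ultimately show ?thesis using A by (metis card_Un_disjoint finite_Int)
qed

lemma card_split_three: "finite A \<Longrightarrow> card A = card (A \<inter> x1) + card (A \<inter> (x2 - x1)) + card (A - (x1 \<union> x2))"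
proof -
  assume A: "finite A"
  have "A = (A \<inter> x1) \<union> (A \<inter> (x2 - x1)) \<union> (A - (x1 \<union> x2))" by auto
  moreover have "(A \<inter> x1) \<inter> (A \<inter> (x2 - x1)) = {}" "((A \<inter> x1) \<union> (A \<inter> (x2 - x1))) \<inter> (A - (x1 \<union> x2)) = {}" by auto
  ultimately show ?thesis using A by (metis card_Un_disjoint finite_Int finite_Diff finite_Un)
qed

lemma pair_weight_cases: "pair_weight x1 x2 y z =
    (if y \<in> x1 \<inter> x2 \<and> z \<in> - (x1 \<union> x2) then 1 else 0) + (if y \<in> - (x1 \<union> x2) \<and> z \<in> x1 \<inter> x2 then 1 else 0)
  - (if y \<in> x2 - x1 \<and> z \<in> x1 - x2 then 1 else 0) - (if y \<in> x1 - x2 \<and> z \<in> x2 - x1 then 1 else 0)"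
  unfolding pair_weight_def indic_def by auto

lemma sum_pair_weight:
  "(\<Sum>y\<in>A. \<Sum>z\<in>A - {y}. pair_weight x1 x2 y z * G y z)
    = (\<Sum>y\<in>A. \<Sum>z\<in>A - {y}. if y \<in> x1 \<inter> x2 \<and> z \<in> - (x1 \<union> x2) then G y z else 0)
    + (\<Sum>y\<in>A. \<Sum>z\<in>A - {y}. if y \<in> - (x1 \<union> x2) \<and> z \<in> x1 \<inter> x2 then G y z else 0)
    - (\<Sum>y\<in>A. \<Sum>z\<in>A - {y}. if y \<in> x2 - x1 \<and> z \<in> x1 - x2 then G y z else 0)
    - (\<Sum>y\<in>A. \<Sum>z\<in>A - {y}. if y \<in> x1 - x2 \<and> z \<in> x2 - x1 then G y z else 0)"
proof -
  have "pair_weight x1 x2 y z * G y z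
      = (if y \<in> x1 \<inter> x2 \<and> z \<in> - (x1 \<union> x2) then G y z else 0)
      + (if y \<in> - (x1 \<union> x2) \<and> z \<in> x1 \<inter> x2 then G y z else 0)
      - (if y \<in> x2 - x1 \<and> z \<in> x1 - x2 then G y z else 0)
      - (if y \<in> x1 - x2 \<and> z \<in> x2 - x1 then G y z else 0)" for y z
    unfolding pair_weight_cases by (simp add: algebra_simps)
  then show ?thesis by (simp only: sum.distrib sum_subtractf)
qed

lemma poly_rodrigues_poly_Suc_at_nat:
  fixes s cI cO cQ k :: nat
  defines "R \<equiv> rodrigues_poly s (cI + cQ - 1) (cI + k - 1) (cI + cQ + k + cO - 2)"
  shows "poly (rodrigues_poly (Suc s) (cI + cQ) (cI + k) (cI + cQ + k + cO)) (of_nat k)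
    = of_nat cI * of_nat cO * poly R (of_nat k) - of_nat k * of_nat cQ * poly R (of_nat (k - 1))"
proof -
  have shift: "k \<noteq> 0 \<Longrightarrow> poly (pcompose R [:-1, 1:]) (of_nat k) = poly R (of_nat (k - 1))"
    by (simp add: poly_pcompose of_nat_diff)
  show ?thesis
    unfolding rodrigues_poly.simps R_def[symmetric] poly_diff poly_mult
    using shift by (cases "k = 0") (simp_all add: algebra_simps)
qed

theorem tableau_weight_eq_rodrigues:
  "finite A \<Longrightarrow> tableau_weight x1 x2 s A
    = 2 ^ s * poly (rodrigues_poly s (card (A \<inter> x1)) (card (A \<inter> x2)) (card A)) (of_nat (card (A \<inter> (x2 - x1))))"
proof (induction s arbitrary: A)
  case 0
  then show ?case by (simp add: tableau_weight_0)
next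
  case (Suc s)
  note A = Suc.prems
  define c1 where "c1 = card (A \<inter> x1)"
  define c2 where "c2 = card (A \<inter> x2)"
  define m where "m = card A"
  define k where "k = card (A \<inter> (x2 - x1))"
  define cI where "cI = card (A \<inter> (x1 \<inter> x2))"
  define cO where "cO = card (A \<inter> - (x1 \<union> x2))"
  define cQ where "cQ = card (A \<inter> (x1 - x2))"
  define R where "R = rodrigues_poly s (c1 - 1) (c2 - 1) (m - 2)"
  define w where "w = (\<lambda>l. 2 ^ s * poly R (of_nat l) :: complex)"
  have c1: "c1 = cI + cQ" unfolding c1_def cI_def cQ_def using card_Int_split[OF A, of x1 x2] by simp
  have c2: "c2 = cI + k" unfolding c2_def cI_def k_def using card_Int_split[OF A, of x2 x1] by (simp add: Int_commute)
  have "A - (x1 \<union> x2) = A \<inter> - (x1 \<union> x2)" by auto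
  then have m: "m = cI + cQ + k + cO" unfolding m_def k_def cO_def using card_split_three[OF A, of x1 x2] c1 c1_def by simp
  \<comment> \<open>Removing a column that meets each of x1, x2 exactly once lowers c1, c2 by one and m by two.\<close>
  have pair: "tableau_weight x1 x2 s (A - {y, z})
      = w (k - (if y \<in> x2 - x1 then 1 else 0) - (if z \<in> x2 - x1 then 1 else 0))"
    if yz: "y \<in> A" "z \<in> A" "y \<noteq> z" "(y \<in> x1) \<noteq> (z \<in> x1)" "(y \<in> x2) \<noteq> (z \<in> x2)" for y z
  proof -
    have "card ((A - {y, z}) \<inter> x1) = c1 - 1" "card ((A - {y, z}) \<inter> x2) = c2 - 1" "card (A - {y, z}) = m - 2"
      "card ((A - {y, z}) \<inter> (x2 - x1)) = k - (if y \<in> x2 - x1 then 1 else 0) - (if z \<in> x2 - x1 then 1 else 0)"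
      using card_Diff_pair_Int[OF A yz(1-3)] card_Diff_pair[OF A yz(1-3)] yz(4,5)
      unfolding c1_def c2_def m_def k_def by auto
    then show ?thesis unfolding w_def R_def using Suc.IH[of "A - {y, z}"] A by simp
  qed
  let ?S = "\<lambda>U W. \<Sum>y\<in>A. \<Sum>z\<in>A - {y}. (if y \<in> U \<and> z \<in> W then tableau_weight x1 x2 s (A - {y, z}) else 0)"
  have "tableau_weight x1 x2 (Suc s) A
      = ?S (x1 \<inter> x2) (- (x1 \<union> x2)) + ?S (- (x1 \<union> x2)) (x1 \<inter> x2) - ?S (x2 - x1) (x1 - x2) - ?S (x1 - x2) (x2 - x1)"
    unfolding tableau_weight_Suc[OF A] by (rule sum_pair_weight)
  also have "\<dots> = of_nat cI * of_nat cO * w k + of_nat cO * of_nat cI * w k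
      - of_nat k * of_nat cQ * w (k - 1) - of_nat cQ * of_nat k * w (k - 1)"
    unfolding cI_def cO_def cQ_def k_def
    by (intro arg_cong2[where f="(-)"] arg_cong2[where f="(+)"] sum_pairs_indicator[OF A];
        auto simp: k_def intro!: trans[OF pair])
  also have "\<dots> = 2 ^ Suc s * poly (rodrigues_poly (Suc s) c1 c2 m) (of_nat k)"
    unfolding c1 c2 m w_def R_def poly_rodrigues_poly_Suc_at_nat by (simp add: algebra_simps)
  finally show ?case unfolding c1_def c2_def m_def k_def .
qed

section \<open>Kernel operators and the Gram operator of the lifted polytabloids\<close>

lemma kernel_op_eq: "kernel_op n r1 r2 lam \<psi> = (\<lambda>x2. if x2 \<in> layer n r2 then (\<Sum>x1\<in>layer n r1. lam (card (x2 - x1)) * \<psi> x1) else 0)"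
  unfolding kernel_op_def layer_def by simp

lemma kernel_op_lin: "kernel_op n r1 r2 lam (\<lambda>x. c * \<phi> x + d * \<psi> x) = (\<lambda>x. c * kernel_op n r1 r2 lam \<phi> x + d * kernel_op n r1 r2 lam \<psi> x)"
  unfolding kernel_op_eq by (auto simp: sum.distrib sum_distrib_left algebra_simps)

lemma kernel_op_zero: "kernel_op n r1 r2 lam (\<lambda>_. 0) = (\<lambda>_. 0)"
  unfolding kernel_op_eq by auto

lemma kernel_op_lam_lin: "kernel_op n r1 r2 (\<lambda>k. c * f k + d * g k) \<psi> = (\<lambda>x. c * kernel_op n r1 r2 f \<psi> x + d * kernel_op n r1 r2 g \<psi> x)"
  unfolding kernel_op_eq by (auto simp: sum.distrib sum_distrib_left algebra_simps)

lemma kernel_op_L2: "kernel_op n r1 r2 lam \<psi> \<in> L2 n r2"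
  unfolding kernel_op_def L2_def by auto

lemma kernel_op_delta:
  assumes "x1 \<in> layer n r1" "x2 \<in> layer n r2"
  shows "kernel_op n r1 r2 lam (\<lambda>x. if x = x1 then 1 else 0) x2 = lam (card (x2 - x1))"
  unfolding kernel_op_eq using assms finite_layer by (simp add: if_distrib sum.delta' cong: if_cong)

lemma kernel_op_scale: "kernel_op n r1 r2 lam (\<lambda>x. c * \<phi> x) = (\<lambda>x. c * kernel_op n r1 r2 lam \<phi> x)"
  using kernel_op_lin[of n r1 r2 lam c \<phi> 0 \<phi>] by simp

lemma kernel_op_add: "kernel_op n r1 r2 lam (\<lambda>x. \<phi> x + \<psi> x) = (\<lambda>x. kernel_op n r1 r2 lam \<phi> x + kernel_op n r1 r2 lam \<psi> x)"
  using kernel_op_lin[of n r1 r2 lam 1 \<phi> 1 \<psi>] by simp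

lemma kernel_op_act:
  assumes g: "g permutes {..<n}"
  shows "act g (kernel_op n r1 r2 lam \<psi>) = kernel_op n r1 r2 lam (act g \<psi>)"
proof
  fix x2
  have ig: "inv g permutes {..<n}" by (rule permutes_inv[OF g])
  have bg: "bij g" "bij (inv g)" using permutes_bij[OF g] permutes_bij[OF ig] by auto
  have ii: "inv g ` (g ` y) = y" "g ` (inv g ` y) = y" for y
    by (simp_all add: image_image permutes_inverses[OF g])
  have cd: "card (inv g ` x2 - y) = card (x2 - g ` y)" for y
  proof -
    have "inv g ` x2 - y = inv g ` (x2 - g ` y)"
      using ii bij_is_inj[OF bg(2)] by (metis image_set_diff)
    then show ?thesis using card_image[OF inj_on_subset[OF bij_is_inj[OF bg(2)] subset_UNIV]] by simp
  qed
  have "(\<Sum>x1\<in>layer n r1. lam (card (inv g ` x2 - x1)) * \<psi> x1) = (\<Sum>x1\<in>layer n r1. lam (card (x2 - x1)) * \<psi> (inv g ` x1))"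
  proof (rule sum.reindex_bij_witness[where i="\<lambda>y. inv g ` y" and j="\<lambda>y. g ` y"])
    fix y assume "y \<in> layer n r1"
    then show "inv g ` (g ` y) = y" "g ` y \<in> layer n r1" using ii image_permutes_layer[OF g] by auto
    show "lam (card (x2 - g ` y)) * \<psi> (inv g ` (g ` y)) = lam (card (inv g ` x2 - y)) * \<psi> y"
      using cd ii by simp
  next
    fix y assume "y \<in> layer n r1"
    then show "g ` (inv g ` y) = y" "inv g ` y \<in> layer n r1" using ii image_permutes_layer[OF ig] by auto
  qed
  moreover have "inv g ` x2 \<in> layer n r2 \<longleftrightarrow> x2 \<in> layer n r2" using image_permutes_layer[OF ig] by simp
  ultimately show "act g (kernel_op n r1 r2 lam \<psi>) x2 = kernel_op n r1 r2 lam (act g \<psi>) x2"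
    unfolding kernel_op_eq act_def by simp
qed

lemma prod_indic: "finite I \<Longrightarrow> (\<Prod>i\<in>I. indic x (f i)) = (if f ` I \<subseteq> x then 1 else 0)"
  by (induction I rule: finite_induct) (auto simp: indic_def)

lemma subset_sum_polytabloid_prod:
  assumes T: "tableau n s a b" and sr: "s \<le> r" and rs: "r + s \<le> n" and x: "x \<subseteq> {..<n}" "card x = r"
  shows "subset_sum n r (polytabloid s a b) x = (\<Prod>i<s. indic x (b i) - indic x (a i))"
proof -
  have "(\<Prod>i<s. indic x (b i) - indic x (a i)) = (\<Prod>i<s. (- indic x (a i)) + indic x (b i))" by simp
  also have "\<dots> = (\<Sum>E\<in>Pow {..<s}. (\<Prod>i\<in>E. - indic x (a i)) * (\<Prod>i\<in>{..<s} - E. indic x (b i)))"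
    by (rule prod_add) simp
  also have "\<dots> = (\<Sum>E\<in>Pow {..<s}. (-1) ^ card E * (if swapped_row s a b E \<subseteq> x then 1 else 0))"
  proof (rule sum.cong[OF refl])
    fix E assume E: "E \<in> Pow {..<s}"
    have fE: "finite E" using E finite_subset by blast
    have "(\<Prod>i\<in>E. - indic x (a i)) = (\<Prod>i\<in>E. (-1) * indic x (a i))" by simp
    also have "\<dots> = (\<Prod>i\<in>E. -1) * (\<Prod>i\<in>E. indic x (a i))" by (rule prod.distrib)
    finally have m: "(\<Prod>i\<in>E. - indic x (a i)) = (-1) ^ card E * (\<Prod>i\<in>E. indic x (a i))" by simp
    have "(\<Prod>i<s. indic x (column_pick a b E i)) = (\<Prod>i\<in>{..<s} - E. indic x (column_pick a b E i)) * (\<Prod>i\<in>E. indic x (column_pick a b E i))"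
      using E by (intro prod.subset_diff) auto
    also have "\<dots> = (\<Prod>i\<in>{..<s} - E. indic x (b i)) * (\<Prod>i\<in>E. indic x (a i))"
      unfolding column_pick_def by (intro arg_cong2[where f="(*)"] prod.cong) auto
    finally have "(\<Prod>i\<in>E. indic x (a i)) * (\<Prod>i\<in>{..<s} - E. indic x (b i)) = (if swapped_row s a b E \<subseteq> x then 1 else 0)"
      using prod_indic[of "{..<s}" x "column_pick a b E"] unfolding swapped_row_def by (simp add: mult.commute)
    then show "(\<Prod>i\<in>E. - indic x (a i)) * (\<Prod>i\<in>{..<s} - E. indic x (b i)) = (-1) ^ card E * (if swapped_row s a b E \<subseteq> x then 1 else 0)"
      unfolding m by (simp add: mult.assoc)
  qed
  finally show ?thesis using subset_sum_polytabloid[OF T sr rs] x by simp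
qed

definition tableaux :: "nat \<Rightarrow> nat \<Rightarrow> ((nat \<Rightarrow> nat) \<times> (nat \<Rightarrow> nat)) set" where
  "tableaux n s = tableaux_on s {..<n}"

definition up_polytabloid :: "nat \<Rightarrow> nat \<Rightarrow> nat \<Rightarrow> (nat \<Rightarrow> nat) \<times> (nat \<Rightarrow> nat) \<Rightarrow> (nat set \<Rightarrow> complex)" where
  "up_polytabloid n s r t = subset_sum n r (polytabloid s (fst t) (snd t))"

definition gram_op :: "nat \<Rightarrow> nat \<Rightarrow> nat \<Rightarrow> nat \<Rightarrow> (nat set \<Rightarrow> complex) \<Rightarrow> (nat set \<Rightarrow> complex)" where
  "gram_op n s r r' \<psi> = (\<lambda>x. \<Sum>t\<in>tableaux n s. inner_L2 n \<psi> (up_polytabloid n s r t) * up_polytabloid n s r' t x)"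

lemma finite_tableaux: "finite (tableaux n s)"
  unfolding tableaux_def by (rule finite_tableaux_on) simp

lemma tableaux_tableau: "t \<in> tableaux n s \<Longrightarrow> tableau n s (fst t) (snd t)"
  unfolding tableaux_def tableaux_on_def tableau_def by (auto simp: PiE_iff)

lemma cnj_up_polytabloid: "t \<in> tableaux n s \<Longrightarrow> cnj (up_polytabloid n s r t x) = up_polytabloid n s r t x"
  unfolding up_polytabloid_def subset_sum_def using cnj_polytabloid[OF tableaux_tableau] by (simp add: cnj_sum)

lemma up_polytabloid_outside: "x \<notin> layer n r \<Longrightarrow> up_polytabloid n s r t x = 0"
  unfolding up_polytabloid_def subset_sum_def layer_def by auto

lemma inner_L2_up_polytabloid:
  assumes t: "t \<in> tableaux n s"
  shows "inner_L2 n \<psi> (up_polytabloid n s r t) = (\<Sum>x\<in>layer n r. \<psi> x * up_polytabloid n s r t x)"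
proof -
  have "inner_L2 n \<psi> (up_polytabloid n s r t) = (\<Sum>x\<in>Pow {..<n}. \<psi> x * up_polytabloid n s r t x)"
    unfolding inner_L2_def using cnj_up_polytabloid[OF t] by simp
  also have "\<dots> = (\<Sum>x\<in>layer n r. \<psi> x * up_polytabloid n s r t x)"
    by (rule sum.mono_neutral_right) (auto simp: layer_subset_Pow up_polytabloid_outside)
  finally show ?thesis .
qed

lemma up_polytabloid_Specht_layer: "t \<in> tableaux n s \<Longrightarrow> up_polytabloid n s r t \<in> Specht_layer n r s"
  unfolding up_polytabloid_def Specht_layer_def using polytabloid_Specht[OF tableaux_tableau] by blast

lemma gram_op_Specht_layer: "gram_op n s r r' \<psi> \<in> Specht_layer n r' s"
  unfolding gram_op_def
  by (rule csubspace_sum[OF csubspace_Specht_layer finite_tableaux]) (rule csubspace_scale[OF csubspace_Specht_layer up_polytabloid_Specht_layer])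

lemma sum_tableaux_up_polytabloid:
  assumes r: "s \<le> r" "r + s \<le> n" and r': "s \<le> r'" "r' + s \<le> n"
    and x: "x1 \<in> layer n r" "x2 \<in> layer n r'"
  shows "(\<Sum>t\<in>tableaux n s. up_polytabloid n s r' t x2 * up_polytabloid n s r t x1) = 2 ^ s * poly (rodrigues_poly s r r' n) (of_nat (card (x2 - x1)))"
proof -
  have "(\<Sum>t\<in>tableaux n s. up_polytabloid n s r' t x2 * up_polytabloid n s r t x1) = (\<Sum>t\<in>tableaux n s. \<Prod>i<s. pair_weight x1 x2 (fst t i) (snd t i))"
  proof (rule sum.cong[OF refl])
    fix t assume t: "t \<in> tableaux n s"
    have "up_polytabloid n s r' t x2 = (\<Prod>i<s. indic x2 (snd t i) - indic x2 (fst t i))"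
      unfolding up_polytabloid_def by (rule subset_sum_polytabloid_prod[OF tableaux_tableau[OF t] r']) (use x in \<open>auto simp: layer_def\<close>)
    moreover have "up_polytabloid n s r t x1 = (\<Prod>i<s. indic x1 (snd t i) - indic x1 (fst t i))"
      unfolding up_polytabloid_def by (rule subset_sum_polytabloid_prod[OF tableaux_tableau[OF t] r]) (use x in \<open>auto simp: layer_def\<close>)
    ultimately show "up_polytabloid n s r' t x2 * up_polytabloid n s r t x1 = (\<Prod>i<s. pair_weight x1 x2 (fst t i) (snd t i))"
      unfolding pair_weight_def by (simp add: prod.distrib)
  qed
  also have "\<dots> = tableau_weight x1 x2 s {..<n}" unfolding tableau_weight_def tableaux_def by (simp add: case_prod_beta)
  also have "\<dots> = 2 ^ s * poly (rodrigues_poly s (card ({..<n} \<inter> x1)) (card ({..<n} \<inter> x2)) (card {..<n})) (of_nat (card ({..<n} \<inter> (x2 - x1))))"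
    by (rule tableau_weight_eq_rodrigues) simp
  finally have F: "(\<Sum>t\<in>tableaux n s. up_polytabloid n s r' t x2 * up_polytabloid n s r t x1) = 2 ^ s * poly (rodrigues_poly s (card ({..<n} \<inter> x1)) (card ({..<n} \<inter> x2)) (card {..<n})) (of_nat (card ({..<n} \<inter> (x2 - x1))))" .
  have "{..<n} \<inter> x1 = x1" "{..<n} \<inter> x2 = x2" "{..<n} \<inter> (x2 - x1) = x2 - x1" using x unfolding layer_def by auto
  then show ?thesis using F x unfolding layer_def by simp
qed

lemma kernel_op_rodrigues_eq_gram_op:
  assumes r: "s \<le> r" "r + s \<le> n" and r': "s \<le> r'" "r' + s \<le> n"
  shows "kernel_op n r r' (\<lambda>k. 2 ^ s * poly (rodrigues_poly s r r' n) (of_nat k)) \<psi> = gram_op n s r r' \<psi>"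
proof
  fix x2
  show "kernel_op n r r' (\<lambda>k. 2 ^ s * poly (rodrigues_poly s r r' n) (of_nat k)) \<psi> x2 = gram_op n s r r' \<psi> x2"
  proof (cases "x2 \<in> layer n r'")
    case True
    have "(\<Sum>x1\<in>layer n r. 2 ^ s * poly (rodrigues_poly s r r' n) (of_nat (card (x2 - x1))) * \<psi> x1)
        = (\<Sum>x1\<in>layer n r. \<Sum>t\<in>tableaux n s. up_polytabloid n s r' t x2 * up_polytabloid n s r t x1 * \<psi> x1)"
    proof (rule sum.cong[OF refl])
      fix x1 assume "x1 \<in> layer n r"
      then show "2 ^ s * poly (rodrigues_poly s r r' n) (of_nat (card (x2 - x1))) * \<psi> x1 = (\<Sum>t\<in>tableaux n s. up_polytabloid n s r' t x2 * up_polytabloid n s r t x1 * \<psi> x1)"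
        using sum_tableaux_up_polytabloid[OF r r' _ True, of x1] sum_distrib_right[of "\<lambda>t. up_polytabloid n s r' t x2 * up_polytabloid n s r t x1" "tableaux n s" "\<psi> x1"]
        by simp
    qed
    also have "\<dots> = (\<Sum>t\<in>tableaux n s. up_polytabloid n s r' t x2 * (\<Sum>x1\<in>layer n r. \<psi> x1 * up_polytabloid n s r t x1))"
      by (subst sum.swap) (simp add: sum_distrib_left algebra_simps)
    also have "\<dots> = gram_op n s r r' \<psi> x2"
      unfolding gram_op_def by (intro sum.cong refl) (simp add: inner_L2_up_polytabloid mult.commute)
    finally show ?thesis unfolding kernel_op_eq using True by simp
  next
    case False
    then show ?thesis unfolding kernel_op_eq gram_op_def using up_polytabloid_outside[OF False] by simp
  qed
qed

lemma std_tableaux: "2 * s \<le> n \<Longrightarrow> (std_top s, std_bot s) \<in> tableaux n s"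
  unfolding tableaux_def tableaux_on_def std_top_def std_bot_def by (auto simp: inj_on_def)

section \<open>Equivariant kernels on the lifted Specht modules\<close>

context
  fixes n s :: nat
  assumes s_le: "2 * s \<le> n"
begin

lemma kernel_op_std_multiple:
  fixes r r' :: nat and lam :: "nat \<Rightarrow> complex"
  assumes r': "s \<le> r'" "r' + s \<le> n"
  defines "K \<equiv> kernel_op n r r' lam (subset_sum n r (std_polytabloid s))"
  shows "K = (\<lambda>x. K (base_set n s (std_top s) (std_bot s) r') * subset_sum n r' (std_polytabloid s) x)"
proof (rule tableau_covariant_eq_multiple[OF tableau_std[OF s_le] r'])
  show "K \<in> L2 n r'" unfolding K_def by (rule kernel_op_L2)
  have "tableau_covariant n s (std_top s) (std_bot s) (subset_sum n r (std_polytabloid s))"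
    by (rule tableau_covariant_equivariant[OF tableau_std[OF s_le] tableau_covariant_polytabloid[OF tableau_std[OF s_le]]])
       (simp_all add: act_subset_sum subset_sum_scale)
  then show "tableau_covariant n s (std_top s) (std_bot s) K"
    unfolding K_def by (rule tableau_covariant_equivariant[OF tableau_std[OF s_le]])
       (simp_all add: kernel_op_act kernel_op_scale)
qed

lemma kernel_op_subset_sum_Specht:
  assumes K: "kernel_op n r r' lam (subset_sum n r (std_polytabloid s)) = (\<lambda>x. c * subset_sum n r' (std_polytabloid s) x)"
    and \<theta>: "\<theta> \<in> Specht n s"
  shows "kernel_op n r r' lam (subset_sum n r \<theta>) = (\<lambda>x. c * subset_sum n r' \<theta> x)"
proof -
  define S where "S = {\<theta>. kernel_op n r r' lam (subset_sum n r \<theta>) = (\<lambda>x. c * subset_sum n r' \<theta> x)}"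
  have "csubspace S" unfolding S_def csubspace_def
    by (simp add: subset_sum_zero subset_sum_add subset_sum_scale kernel_op_zero kernel_op_add kernel_op_scale
        algebra_simps)
  moreover have "act g \<theta> \<in> S" if "g permutes {..<n}" "\<theta> \<in> S" for g \<theta>
    using that unfolding S_def by (simp add: act_subset_sum[symmetric] kernel_op_act[symmetric] act_scale)
  moreover have "std_polytabloid s \<in> S" unfolding S_def using K by simp
  ultimately have "Specht n s \<subseteq> S" by (rule Specht_subset_invariant[OF _ _ tableau_std[OF s_le]])
  then show ?thesis using \<theta> unfolding S_def by blast
qed

lemma kernel_op_Specht_layer_eq_0:
  assumes K0: "kernel_op n r r' lam (subset_sum n r (std_polytabloid s)) = (\<lambda>_. 0)"
    and \<phi>: "\<phi> \<in> Specht_layer n r s"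
  shows "kernel_op n r r' lam \<phi> = (\<lambda>_. 0)"
proof -
  obtain \<theta> where \<theta>: "\<theta> \<in> Specht n s" "\<phi> = subset_sum n r \<theta>" using \<phi> unfolding Specht_layer_def by blast
  have "kernel_op n r r' lam (subset_sum n r (std_polytabloid s)) = (\<lambda>x. 0 * subset_sum n r' (std_polytabloid s) x)"
    using K0 by simp
  from kernel_op_subset_sum_Specht[OF this \<theta>(1)] show ?thesis unfolding \<theta>(2) by simp
qed

lemma gram_op_eq_kernel_op:
  "s \<le> r \<Longrightarrow> r + s \<le> n \<Longrightarrow> gram_op n s r r \<psi> = kernel_op n r r (\<lambda>k. 2 ^ s * poly (rodrigues_poly s r r n) (of_nat k)) \<psi>"
  by (rule kernel_op_rodrigues_eq_gram_op[symmetric]) auto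

lemma inner_L2_gram_op:
  "inner_L2 n (gram_op n s r r \<psi>) \<phi> = (\<Sum>t\<in>tableaux n s. inner_L2 n \<psi> (up_polytabloid n s r t) * inner_L2 n (up_polytabloid n s r t) \<phi>)"
  unfolding gram_op_def by (rule inner_L2_sum_left)

lemma inner_L2_gram_op_sym: "inner_L2 n (gram_op n s r r \<psi>) \<phi> = inner_L2 n \<psi> (gram_op n s r r \<phi>)"
proof -
  have "inner_L2 n \<psi> (gram_op n s r r \<phi>)
      = (\<Sum>t\<in>tableaux n s. cnj (inner_L2 n \<phi> (up_polytabloid n s r t)) * inner_L2 n \<psi> (up_polytabloid n s r t))"
    unfolding gram_op_def by (rule inner_L2_sum_right)
  also have "\<dots> = (\<Sum>t\<in>tableaux n s. inner_L2 n \<psi> (up_polytabloid n s r t) * inner_L2 n (up_polytabloid n s r t) \<phi>)"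
    by (intro sum.cong refl) (simp add: cnj_inner_L2 mult.commute)
  finally show ?thesis unfolding inner_L2_gram_op by simp
qed

(* The eigenvalue is <G u, u> / <u, u> for the lifted standard polytabloid u, and
   <G u, u> is a sum of squares containing the term |<u, u>|^2. *)
lemma gram_op_eigenvalue:
  assumes r: "s \<le> r" "r + s \<le> n"
  obtains R :: real where "R > 0" "\<And>\<phi>. \<phi> \<in> Specht_layer n r s \<Longrightarrow> gram_op n s r r \<phi> = (\<lambda>x. of_real R * \<phi> x)"
proof -
  define u where "u = subset_sum n r (std_polytabloid s)"
  define \<alpha> where "\<alpha> = gram_op n s r r u (base_set n s (std_top s) (std_bot s) r)"
  have Gu: "gram_op n s r r u = (\<lambda>x. \<alpha> * u x)"
    unfolding \<alpha>_def u_def gram_op_eq_kernel_op[OF r] by (rule kernel_op_std_multiple[OF r])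
  have G_all: "gram_op n s r r \<phi> = (\<lambda>x. \<alpha> * \<phi> x)" if \<phi>: "\<phi> \<in> Specht_layer n r s" for \<phi>
  proof -
    obtain \<theta> where \<theta>: "\<theta> \<in> Specht n s" "\<phi> = subset_sum n r \<theta>" using \<phi> unfolding Specht_layer_def by blast
    show ?thesis
      using kernel_op_subset_sum_Specht[OF Gu[unfolded u_def gram_op_eq_kernel_op[OF r]] \<theta>(1)]
      unfolding \<theta>(2) gram_op_eq_kernel_op[OF r] .
  qed
  have "u \<in> L2X n" using subset_sum_L2 L2_sub_L2X unfolding u_def by blast
  moreover have "u \<noteq> (\<lambda>_. 0)" unfolding u_def by (rule subset_sum_polytabloid_nonzero[OF tableau_std[OF s_le] r])
  ultimately obtain R2 where R2: "R2 > 0" "inner_L2 n u u = of_real R2" by (rule inner_L2_self_pos)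
  define R1 where "R1 = (\<Sum>t\<in>tableaux n s. (cmod (inner_L2 n u (up_polytabloid n s r t)))\<^sup>2)"
  have i1: "inner_L2 n (gram_op n s r r u) u = of_real R1"
    unfolding inner_L2_gram_op R1_def of_real_sum
  proof (intro sum.cong refl)
    fix t
    have "inner_L2 n (up_polytabloid n s r t) u = cnj (inner_L2 n u (up_polytabloid n s r t))"
      by (rule cnj_inner_L2[symmetric])
    then show "inner_L2 n u (up_polytabloid n s r t) * inner_L2 n (up_polytabloid n s r t) u
        = of_real ((cmod (inner_L2 n u (up_polytabloid n s r t)))\<^sup>2)"
      by (simp only: complex_norm_square)
  qed
  have i2: "inner_L2 n (gram_op n s r r u) u = \<alpha> * of_real R2"
    unfolding Gu using inner_L2_lin_left[of n \<alpha> u 0 u u] R2(2) by simp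
  have "up_polytabloid n s r (std_top s, std_bot s) = u" unfolding up_polytabloid_def u_def by simp
  moreover have "(cmod (inner_L2 n u (up_polytabloid n s r (std_top s, std_bot s))))\<^sup>2 \<le> R1"
    unfolding R1_def by (rule member_le_sum) (simp_all add: std_tableaux[OF s_le] finite_tableaux)
  ultimately have "R2\<^sup>2 \<le> R1" using R2 by simp
  then have "R1 > 0" using R2(1) by (smt (verit) zero_less_power)
  from i1 i2 have "\<alpha> * of_real R2 = of_real R1" by simp
  then have "\<alpha> = of_real (R1 / R2)" using R2(1) by (simp add: field_simps)
  then show ?thesis using \<open>R1 > 0\<close> R2(1) G_all by (intro that[of "R1 / R2"]) simp_all
qed

lemma Specht_layer_orthogonal_decomposition:
  assumes r: "s \<le> r" "r + s \<le> n" and \<psi>: "\<psi> \<in> L2X n"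
  obtains p q where "p \<in> Specht_layer n r s" "q \<in> L2X n" "\<forall>\<phi>\<in>Specht_layer n r s. inner_L2 n q \<phi> = 0"
    "\<psi> = (\<lambda>x. p x + q x)"
proof -
  obtain R :: real where R: "R > 0" "\<And>\<phi>. \<phi> \<in> Specht_layer n r s \<Longrightarrow> gram_op n s r r \<phi> = (\<lambda>x. of_real R * \<phi> x)"
    using gram_op_eigenvalue[OF r] by blast
  define p where "p = (\<lambda>x. inverse (of_real R) * gram_op n s r r \<psi> x)"
  define q where "q = (\<lambda>x. 1 * \<psi> x + (- 1) * p x)"
  have pV: "p \<in> Specht_layer n r s" unfolding p_def by (rule csubspace_scale[OF csubspace_Specht_layer gram_op_Specht_layer])
  have "p \<in> L2X n" using pV Specht_layer_L2 L2_sub_L2X by blast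
  then have qL: "q \<in> L2X n" unfolding q_def by (rule csubspace_lin[OF csubspace_L2X \<psi>])
  have "inner_L2 n q \<phi> = 0" if \<phi>: "\<phi> \<in> Specht_layer n r s" for \<phi>
  proof -
    have "inner_L2 n p \<phi> = inverse (of_real R) * inner_L2 n (gram_op n s r r \<psi>) \<phi>"
      unfolding p_def using inner_L2_lin_left[of n "inverse (of_real R)" "gram_op n s r r \<psi>" 0 \<psi> \<phi>] by simp
    also have "\<dots> = inverse (of_real R) * inner_L2 n \<psi> (\<lambda>x. of_real R * \<phi> x)"
      unfolding inner_L2_gram_op_sym R(2)[OF \<phi>] ..
    also have "\<dots> = inner_L2 n \<psi> \<phi>"
      using inner_L2_lin_right[of n \<psi> "of_real R" \<phi> 0 \<phi>] R(1) by simp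
    finally show ?thesis unfolding q_def inner_L2_lin_left by simp
  qed
  moreover have "\<psi> = (\<lambda>x. p x + q x)" unfolding q_def by simp
  ultimately show ?thesis using that pV qL by blast
qed

end

definition admissible_kernel :: "nat \<Rightarrow> nat \<Rightarrow> nat \<Rightarrow> nat \<Rightarrow> (nat \<Rightarrow> complex) \<Rightarrow> bool" where
  "admissible_kernel n r1 r2 s lam \<longleftrightarrow> (\<forall>\<psi>\<in>L2X n.
     (\<forall>\<phi>\<in>Specht_layer n r1 s. inner_L2 n \<psi> \<phi> = 0) \<longrightarrow> kernel_op n r1 r2 lam \<psi> = (\<lambda>_. 0))"

context
  fixes n s r1 r2 :: nat
  assumes r1: "s \<le> r1" "r1 + s \<le> n" and r2: "s \<le> r2" "r2 + s \<le> n"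
begin

lemma kernel_vanishes:
  assumes K0: "kernel_op n r1 r2 lam (subset_sum n r1 (std_polytabloid s)) = (\<lambda>_. 0)"
    and adm: "admissible_kernel n r1 r2 s lam"
    and x: "x1 \<in> layer n r1" "x2 \<in> layer n r2"
  shows "lam (card (x2 - x1)) = 0"
proof -
  have s_le: "2 * s \<le> n" using r1 by simp
  define \<delta> where "\<delta> = (\<lambda>x. if x = x1 then 1 else (0::complex))"
  have "\<delta> \<in> L2X n" unfolding \<delta>_def L2X_def using x unfolding layer_def by auto
  then obtain p q where pq: "p \<in> Specht_layer n r1 s" "q \<in> L2X n" "\<forall>\<phi>\<in>Specht_layer n r1 s. inner_L2 n q \<phi> = 0"
    "\<delta> = (\<lambda>x. p x + q x)"
    using Specht_layer_orthogonal_decomposition[OF s_le r1] by blast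
  have "kernel_op n r1 r2 lam p = (\<lambda>_. 0)" by (rule kernel_op_Specht_layer_eq_0[OF s_le K0 pq(1)])
  moreover have "kernel_op n r1 r2 lam q = (\<lambda>_. 0)" using adm pq(2,3) unfolding admissible_kernel_def by blast
  ultimately have "kernel_op n r1 r2 lam \<delta> x2 = 0" unfolding pq(4) kernel_op_add by simp
  then show ?thesis unfolding \<delta>_def kernel_op_delta[OF x] .
qed

lemma card_diff_layers_attained:
  assumes k: "r2 - r1 \<le> k" "k \<le> r2 - r1 + s"
  obtains x1 x2 where "x1 \<in> layer n r1" "x2 \<in> layer n r2" "card (x2 - x1) = k"
proof -
  have k': "r2 \<le> r1 + k" "k \<le> r2" "r1 + k \<le> n" using k r1 r2 by auto
  have "{..<r1} \<in> layer n r1" unfolding layer_def using r1 by auto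
  moreover have "{r1 + k - r2..<r1 + k} \<in> layer n r2" unfolding layer_def using k' by auto
  moreover have "{r1 + k - r2..<r1 + k} - {..<r1} = {r1..<r1 + k}" using k' by auto
  ultimately show ?thesis using that by fastforce
qed

(* An admissible kernel killing the lifted standard polytabloid vanishes at the s + 1
   consecutive values of |x2 - x1| from r2 - r1 on. *)
lemma kernel_poly_eq_0:
  fixes P :: "complex poly"
  assumes K0: "kernel_op n r1 r2 (\<lambda>k. poly P (of_nat k)) (subset_sum n r1 (std_polytabloid s)) = (\<lambda>_. 0)"
    and adm: "admissible_kernel n r1 r2 s (\<lambda>k. poly P (of_nat k))"
    and d: "degree P \<le> s"
  shows "P = 0"
proof (rule poly_eqI_degree[of "of_nat ` {r2 - r1 .. r2 - r1 + s}"])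
  fix z :: complex assume "z \<in> of_nat ` {r2 - r1 .. r2 - r1 + s}"
  then obtain k where k: "r2 - r1 \<le> k" "k \<le> r2 - r1 + s" "z = of_nat k" by auto
  obtain x1 x2 where "x1 \<in> layer n r1" "x2 \<in> layer n r2" "card (x2 - x1) = k"
    using card_diff_layers_attained[OF k(1,2)] .
  then show "poly P z = poly 0 z" using kernel_vanishes[OF K0 adm] k(3) by force
next
  have "card (of_nat ` {r2 - r1 .. r2 - r1 + s} :: complex set) = Suc s"
    by (subst card_image) (auto simp: inj_on_def)
  then show "degree P < card (of_nat ` {r2 - r1 .. r2 - r1 + s} :: complex set)"
    "degree (0 :: complex poly) < card (of_nat ` {r2 - r1 .. r2 - r1 + s} :: complex set)"
    using d by auto
qed

end

definition lambda_norm :: "nat \<Rightarrow> nat \<Rightarrow> nat \<Rightarrow> nat \<Rightarrow> complex" where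
  "lambda_norm n r1 r2 s = ffact_c (of_nat (n - r1)) s * ffact_c (of_nat r2) s"

definition lambda_candidate :: "nat \<Rightarrow> nat \<Rightarrow> nat \<Rightarrow> nat \<Rightarrow> complex poly" where
  "lambda_candidate n r1 r2 s = smult (inverse (lambda_norm n r1 r2 s)) (rodrigues_poly s r1 r2 n)"

lemma ffact_c_nonzero: "k \<le> m \<Longrightarrow> ffact_c (of_nat m) k \<noteq> 0"
  unfolding ffact_c_def by (auto simp: prod_zero_iff)

lemma ffact_c_mult_fact: "k \<le> m \<Longrightarrow> ffact_c (of_nat m) k * fact (m - k) = fact m"
proof (induction k)
  case 0
  then show ?case by (simp add: ffact_c_def)
next
  case (Suc k)
  have f: "fact (m - k) = (of_nat (m - k) :: complex) * fact (m - Suc k)"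
    using Suc.prems by (metis Suc_diff_Suc fact_Suc Suc_le_lessD diff_Suc_1 of_nat_mult mult.commute fact_Suc_0 Suc_diff_le)
  have "ffact_c (of_nat m) (Suc k) = ffact_c (of_nat m) k * (of_nat m - of_nat k)"
    unfolding ffact_c_def by simp
  also have "(of_nat m - of_nat k :: complex) = of_nat (m - k)" using Suc.prems by (simp add: of_nat_diff)
  finally show ?case using Suc f by (simp add: mult.assoc)
qed

context
  fixes n s r1 r2 :: nat
  assumes r1: "s \<le> r1" "r1 + s \<le> n" and r2: "s \<le> r2" "r2 + s \<le> n"
begin

lemma lambda_norm_nonzero: "lambda_norm n r1 r2 s \<noteq> 0"
  unfolding lambda_norm_def using ffact_c_nonzero[of s "n - r1"] ffact_c_nonzero[of s r2] r1 r2 by auto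

lemma degree_lambda_candidate: "degree (lambda_candidate n r1 r2 s) = s"
  unfolding lambda_candidate_def using lambda_norm_nonzero degree_rodrigues_poly[of s n r1 r2] r1 by simp

lemma poly_lambda_candidate_0: "poly (lambda_candidate n r1 r2 s) 0 = 1"
proof -
  have "poly (rodrigues_poly s r1 r2 n) 0 = ffact_c (of_nat r2) s * ffact_c (of_nat n - of_nat r1) s"
    by (rule poly_rodrigues_poly_0) (use r1 r2 in auto)
  also have "(of_nat n - of_nat r1 :: complex) = of_nat (n - r1)" using r1 by (simp add: of_nat_diff)
  finally show ?thesis
    unfolding lambda_candidate_def using lambda_norm_nonzero unfolding lambda_norm_def by (simp add: field_simps)
qed

lemma kernel_op_lambda_candidate:
  "kernel_op n r1 r2 (\<lambda>k. poly (lambda_candidate n r1 r2 s) (of_nat k)) \<psi>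
    = (\<lambda>x. (inverse (lambda_norm n r1 r2 s) / 2 ^ s) * gram_op n s r1 r2 \<psi> x)"
proof -
  define c where "c = inverse (lambda_norm n r1 r2 s) / 2 ^ s"
  have "kernel_op n r1 r2 (\<lambda>k. poly (lambda_candidate n r1 r2 s) (of_nat k)) \<psi>
      = kernel_op n r1 r2 (\<lambda>k. c * (2 ^ s * poly (rodrigues_poly s r1 r2 n) (of_nat k)) + 0 * 0) \<psi>"
    unfolding lambda_candidate_def c_def by simp
  also have "\<dots> = (\<lambda>x. c * kernel_op n r1 r2 (\<lambda>k. 2 ^ s * poly (rodrigues_poly s r1 r2 n) (of_nat k)) \<psi> x
      + 0 * kernel_op n r1 r2 (\<lambda>k. 0) \<psi> x)"
    by (rule kernel_op_lam_lin)
  finally show ?thesis unfolding c_def using kernel_op_rodrigues_eq_gram_op[OF r1 r2] by simp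
qed

lemma admissible_lambda_candidate:
  "admissible_kernel n r1 r2 s (\<lambda>k. poly (lambda_candidate n r1 r2 s) (of_nat k))"
  unfolding admissible_kernel_def kernel_op_lambda_candidate gram_op_def
  using up_polytabloid_Specht_layer by auto

lemma kernel_op_lambda_candidate_std_nonzero:
  "kernel_op n r1 r2 (\<lambda>k. poly (lambda_candidate n r1 r2 s) (of_nat k))
     (subset_sum n r1 (std_polytabloid s)) \<noteq> (\<lambda>_. 0)"
proof
  assume "kernel_op n r1 r2 (\<lambda>k. poly (lambda_candidate n r1 r2 s) (of_nat k))
     (subset_sum n r1 (std_polytabloid s)) = (\<lambda>_. 0)"
  then have "lambda_candidate n r1 r2 s = 0"
    using kernel_poly_eq_0[OF r1 r2 _ admissible_lambda_candidate] degree_lambda_candidate by simp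
  then show False using poly_lambda_candidate_0 by simp
qed

(* Both kernels map the lifted standard polytabloid to multiples of its lift to X_r2
   (kernel_op_std_multiple); the combination cancelling these multiples is an admissible
   kernel killing it, hence zero. *)
lemma admissible_kernel_poly_eq:
  assumes adm: "admissible_kernel n r1 r2 s (\<lambda>k. poly p (of_nat k))" and d: "degree p \<le> s"
  obtains c where "p = smult c (lambda_candidate n r1 r2 s)"
proof -
  have s_le: "2 * s \<le> n" using r1 by simp
  define q where "q = lambda_candidate n r1 r2 s"
  define u1 where "u1 = subset_sum n r1 (std_polytabloid s)"
  define u2 where "u2 = subset_sum n r2 (std_polytabloid s)"
  define K where "K = (\<lambda>p. kernel_op n r1 r2 (\<lambda>k. poly p (of_nat k)) u1)"
  define \<mu> where "\<mu> = K p (base_set n s (std_top s) (std_bot s) r2)"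
  define \<nu> where "\<nu> = K q (base_set n s (std_top s) (std_bot s) r2)"
  have Kp: "K p = (\<lambda>x. \<mu> * u2 x)" and Kq: "K q = (\<lambda>x. \<nu> * u2 x)"
    unfolding \<mu>_def \<nu>_def K_def u1_def u2_def by (rule kernel_op_std_multiple[OF s_le r2])+
  have "\<nu> \<noteq> 0" using kernel_op_lambda_candidate_std_nonzero Kq unfolding K_def q_def u1_def by auto
  define D where "D = p - smult (\<mu> / \<nu>) q"
  have KD: "kernel_op n r1 r2 (\<lambda>k. poly D (of_nat k)) \<psi>
      = (\<lambda>x. 1 * kernel_op n r1 r2 (\<lambda>k. poly p (of_nat k)) \<psi> x + (- (\<mu> / \<nu>)) * kernel_op n r1 r2 (\<lambda>k. poly q (of_nat k)) \<psi> x)" for \<psi>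
    unfolding D_def kernel_op_lam_lin[symmetric] by simp
  have "D = 0"
  proof (rule kernel_poly_eq_0[OF r1 r2])
    show "kernel_op n r1 r2 (\<lambda>k. poly D (of_nat k)) (subset_sum n r1 (std_polytabloid s)) = (\<lambda>_. 0)"
      using Kp Kq \<open>\<nu> \<noteq> 0\<close> unfolding KD u1_def[symmetric] K_def by simp
    show "admissible_kernel n r1 r2 s (\<lambda>k. poly D (of_nat k))"
      using adm admissible_lambda_candidate unfolding admissible_kernel_def KD q_def by simp
    have "degree (smult (\<mu> / \<nu>) q) \<le> s" using degree_smult_le[of "\<mu> / \<nu>" q] degree_lambda_candidate q_def by simp
    then show "degree D \<le> s" unfolding D_def using d degree_diff_le by blast
  qed
  then show ?thesis using that[of "\<mu> / \<nu>"] unfolding D_def q_def by simp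
qed

theorem lambda_poly_eq_lambda_candidate: "lambda_poly n r1 r2 s = lambda_candidate n r1 r2 s"
proof -
  have L: "L2comp n r1 s = Specht_layer n r1 s" "L2comp n r2 s = Specht_layer n r2 s"
    using L2comp_eq_Specht_layer r1 r2 by auto
  show ?thesis
    unfolding lambda_poly_def Let_def L admissible_kernel_def[symmetric]
  proof (rule the_equality)
    show "degree (lambda_candidate n r1 r2 s) = s \<and> poly (lambda_candidate n r1 r2 s) 0 = 1 \<and>
      (\<forall>\<psi>\<in>Specht_layer n r1 s. kernel_op n r1 r2 (\<lambda>k. poly (lambda_candidate n r1 r2 s) (of_nat k)) \<psi> \<in> Specht_layer n r2 s) \<and>
      admissible_kernel n r1 r2 s (\<lambda>k. poly (lambda_candidate n r1 r2 s) (of_nat k))"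
      using degree_lambda_candidate poly_lambda_candidate_0 admissible_lambda_candidate
        csubspace_scale[OF csubspace_Specht_layer gram_op_Specht_layer]
      unfolding kernel_op_lambda_candidate by blast
  next
    fix p assume "degree p = s \<and> poly p 0 = 1 \<and>
      (\<forall>\<psi>\<in>Specht_layer n r1 s. kernel_op n r1 r2 (\<lambda>k. poly p (of_nat k)) \<psi> \<in> Specht_layer n r2 s) \<and>
      admissible_kernel n r1 r2 s (\<lambda>k. poly p (of_nat k))"
    then obtain c where "p = smult c (lambda_candidate n r1 r2 s)" "poly p 0 = 1"
      using admissible_kernel_poly_eq by (metis order_refl)
    then show "p = lambda_candidate n r1 r2 s" using poly_lambda_candidate_0 by simp
  qed
qed

end

theorem mainTheorem13:
  fixes n r1 r2 s :: nat
  assumes "n \<ge> 1" and "r1 \<le> n" and "r2 \<le> n" and "s \<le> Nmin n r1 r2"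
  shows "\<forall>t::complex. omega r1 r2 t n * poly (lambda_poly n r1 r2 s) t =
     ffact_c (of_nat n) (2 * s) / (ffact_c (of_nat (n - r1)) s * ffact_c (of_nat r2) s)
       * (nabla ^^ s) (\<lambda>u. omega (r1 - s) (r2 - s) u (n - 2 * s)) t"
proof
  fix t :: complex
  have r: "s \<le> r1" "r1 + s \<le> n" "s \<le> r2" "r2 + s \<le> n" using assms unfolding Nmin_def by auto
  define F where "F = ffact_c (of_nat n) (2 * s)"
  define N where "N = ffact_c (of_nat (n - r1)) s * ffact_c (of_nat r2) s"
  define R where "R = poly (rodrigues_poly s r1 r2 n) t"
  have F: "F * fact (n - 2 * s) = fact n" unfolding F_def by (rule ffact_c_mult_fact) (use r in auto)
  then have "F \<noteq> 0" by auto
  have "N \<noteq> 0" using lambda_norm_nonzero[OF r] unfolding N_def lambda_norm_def .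
  have "(nabla ^^ s) (\<lambda>u. omega (r1 - s) (r2 - s) u (n - 2 * s)) t
      = fact (n - 2 * s) / fact n * omega r1 r2 t n * R"
    unfolding R_def by (subst rodrigues_formula) (use r in auto)
  moreover have "poly (lambda_poly n r1 r2 s) t = R / N"
    unfolding lambda_poly_eq_lambda_candidate[OF r] lambda_candidate_def lambda_norm_def N_def R_def
    by (simp add: field_simps)
  ultimately show "omega r1 r2 t n * poly (lambda_poly n r1 r2 s) t = F / N
       * (nabla ^^ s) (\<lambda>u. omega (r1 - s) (r2 - s) u (n - 2 * s)) t"
    using \<open>F \<noteq> 0\<close> \<open>N \<noteq> 0\<close> unfolding F[symmetric] by (simp add: field_simps)
qed

end
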